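(* Let $d\ge 1$, let $N\ge 1$ be an integer with $2N>d-2$, let $T>0$ and $0<\Lambda<T$. Then the gap-regularized truncated self-intersection local time $L^{(2N)}(\Lambda)$ belongs to $(S)^*$, and its chaos kernel functions are as follows: all kernels $F_{\mathbf m}$ with $\mathbf m$ having some odd component, or with $|\mathbf m|<2N$, vanish; and for $\mathbf m=2\mathbf n$ with $n=|\mathbf n|\ge N$, $$\varphi_{\Lambda,2\mathbf n}(u_1,\dots,u_{2n})=\varphi_{2\mathbf n}(u_1,\dots,u_{2n})-\Theta\big(\Lambda-(v-u)\big)\,\rho_{2\mathbf n}(u_1,\dots,u_{2n}),$$ where $$\rho_{2\mathbf n}(u_1,\dots,u_{2n}):=\int_{D}dt_1\,dt_2\;\psi_{2\mathbf n}(u_1,\dots,u_{2n};t_1,t_2),\qquad D=\{(t_1,t_2):\,0<t_1\le u,\ v\le t_2<T,\ t_2-t_1<\Lambda\}.$$ Consequently $L^{(2N)}-L^{(2N)}(\Lambda)$ has kernel functions $\Theta(\Lambda-(v-u))\rho_{2\mathbf n}$ ($n\ge N$), supported in $\{0<u<v<T,\ v-u<\Lambda\}$. Moreover, if $\Lambda<v$, $u<T-\Lambda$ and $v-u<\Lambda$, then for $d/2+n\neq 2$ $$\rho_{2\mathbf n}=\frac{(2\pi)^{-d/2}}{\mathbf n!}\Big(-\frac12\Big)^n\frac{1}{d/2+n-1}\left(\frac{(v-u)^{-d/2-n+2}-\Lambda^{-d/2-n+2}}{d/2+n-2}+(v-u-\Lambda)\Lambda^{-d/2-n+1}\right),$$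 and for $d=2$, $n=1$ $$\rho_{2}(u_1,u_2)=\frac{1}{4\pi}\left(\ln(v-u)-\ln\Lambda+\frac{\Lambda-v+u}{\Lambda}\right).$$
   Context: Fix $d\ge1$, $T>0$. Let $\mu$ be the ($d$-dimensional) white noise measure on $S^*(\mathbb R,\mathbb R^d)$, i.e. $\int e^{i\langle\omega,\mathbf f\rangle}d\mu(\omega)=e^{-\frac12\langle\mathbf f,\mathbf f\rangle}$ for $\mathbf f=(f_1,\dots,f_d)\in S(\mathbb R,\mathbb R^d)$, with $\langle\mathbf f,\mathbf f\rangle=\sum_i\int f_i^2$, and $\mathbf B(t)=\langle\omega,1\!\!1_{[0,t]}\rangle$ the resulting $d$-dimensional Brownian motion. $(L^2)=L^2(\mu)$, and $(S)\subset(L^2)\subset(S)^*$ is the Hida Gel'fand triple. The S-transform of $\Phi\in(S)^*$ is $(S\Phi)(\mathbf f)=\langle\!\langle\Phi,:\exp\langle\cdot,\mathbf f\rangle:\rangle\!\rangle$ with $:\exp\langle\omega,\mathbf f\rangle:=e^{-\frac12\langle\mathbf f,\mathbf f\rangle}e^{\langle\omega,\mathbf f\rangle}$. Multi-index notation: $\mathbf m=(m_1,\dots,m_d)\in\mathbb N_0^d$, $|\mathbf m|=\sum m_i$, $\mathbf m!=\prod m_i!$; for $\mathbf n$ we write $n=|\mathbf n|$. The kernel functions (chaos kernels) $F_{\mathbf m}$ of $\Phi$ are defined by $(S\Phi)(\mathbf f)=\sum_{\mathbf m}\int F_{\mathbf m}(t_1,\dots,t_{|\mathbf m|})\bigotimes_{i=1}^d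 f_i^{\otimes m_i}(t_1,\dots,t_{|\mathbf m|})\,d^{|\mathbf m|}t$; for $\Phi\in(L^2)$, $\|\Phi\|^2_{(L^2)}=\sum_{\mathbf m}\mathbf m!\,\|F_{\mathbf m}\|^2_{L^2}$. For $\Phi\in(S)^*$, $\Phi^{(k)}$ denotes the projection keeping only the kernels with $|\mathbf m|\ge k$. For $0<t_1<t_2$, the Donsker delta $\delta(\mathbf B(t_2)-\mathbf B(t_1))\in(S)^*$ has vanishing kernels for multi-indices with an odd component, and for $\mathbf m=2\mathbf n$ its kernel is $$\psi_{2\mathbf n}(u_1,\dots,u_{2n};t_1,t_2)=\frac{1}{\mathbf n!}(2\pi)^{-d/2}(t_2-t_1)^{-\frac d2-n}\Big(-\frac12\Big)^n\prod_{k=1}^{2n}1\!\!1_{[t_1,t_2]}(u_k).$$ For $2N>d-2$ the truncated self-intersection local time is $L^{(2N)}=\int_{0<t_1<t_2<T}\delta^{(2N)}(\mathbf B(t_2)-\mathbf B(t_1))\,dt_1dt_2\in(S)^*$, with kernels $\varphi_{2\mathbf n}(u_1,\dots,u_{2n})=\int_{0<t_1<t_2<T}\psi_{2\mathbf n}(u_1,\dots,u_{2n};t_1,t_2)\,dt_1dt_2$ for $n\ge N$ (and zero otherwise). For $\Lambda>0$ the gap-regularized version is $L^{(2N)}(\Lambda)=\int_{0<t_1<t_2<T,\ t_2-t_1>\Lambda}\delta^{(2N)}(\mathbf B(t_2)-\mathbf B(t_1))\,dt_1dt_2$. Throughout, $u=\min(u_1,\dots,u_{2n})$, $v=\max(u_1,\dots,u_{2n})$,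 and $\Theta$ is the indicator function of the positive half line. *)

theory Defs
  imports "HOL-Analysis.Analysis"
begin

text \<open>
  A multi-index is a function m :: nat => nat supported in {..<d}
  (component i of the multi-index is m i, i < d).  A Hida distribution is
  represented by its family of chaos kernels: for every multi-index m a
  kernel function F_m on R^|m| (points of R^|m| are x :: nat => real, only
  the coordinates x 0, ..., x (|m|-1) matter).
\<close>

type_synonym kernels = "(nat \<Rightarrow> nat) \<Rightarrow> (nat \<Rightarrow> real) \<Rightarrow> real"

definition multi_indices :: "nat \<Rightarrow> (nat \<Rightarrow> nat) set" where
  "multi_indices d = {m. \<forall>i\<ge>d. m i = 0}"

definition mabs :: "nat \<Rightarrow> (nat \<Rightarrow> nat) \<Rightarrow> nat" where
  "mabs d m = (\<Sum>i<d. m i)"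

definition mfact :: "nat \<Rightarrow> (nat \<Rightarrow> nat) \<Rightarrow> real" where
  "mfact d m = (\<Prod>i<d. fact (m i))"

text \<open>u = min and v = max of the first k variables.\<close>
definition kmin :: "nat \<Rightarrow> (nat \<Rightarrow> real) \<Rightarrow> real" where
  "kmin k x = Min (x ` {..<k})"

definition kmax :: "nat \<Rightarrow> (nat \<Rightarrow> real) \<Rightarrow> real" where
  "kmax k x = Max (x ` {..<k})"

definition Theta :: "real \<Rightarrow> real" where
  "Theta x = (if x > 0 then 1 else 0)"

text \<open>Physicists' Hermite polynomials and the Hermite functions
  (orthonormal basis of L^2(R), eigenfunctions of A = -D^2 + x^2 + 1 with
  eigenvalues 2k+2).\<close>
fun hermite_poly :: "nat \<Rightarrow> real \<Rightarrow> real" where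
  "hermite_poly 0 x = 1"
| "hermite_poly (Suc 0) x = 2 * x"
| "hermite_poly (Suc (Suc k)) x =
     2 * x * hermite_poly (Suc k) x - 2 * real (Suc k) * hermite_poly k x"

definition hermite_fun :: "nat \<Rightarrow> real \<Rightarrow> real" where
  "hermite_fun k x = hermite_poly k x * exp (- (x\<^sup>2) / 2)
                      / sqrt (2 ^ k * fact k * sqrt pi)"

definition herm_test :: "nat \<Rightarrow> (nat \<Rightarrow> nat) \<Rightarrow> (nat \<Rightarrow> real) \<Rightarrow> real" where
  "herm_test n \<kappa> x = (\<Prod>j<n. hermite_fun (\<kappa> j) (x j))"

definition herm_coeff :: "nat \<Rightarrow> ((nat \<Rightarrow> real) \<Rightarrow> real) \<Rightarrow> (nat \<Rightarrow> nat) \<Rightarrow> real" where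
  "herm_coeff n F \<kappa> = (LINT x | PiM {..<n} (\<lambda>_. lborel). F x * herm_test n \<kappa> x)"

definition neg_norm2 :: "nat \<Rightarrow> nat \<Rightarrow> ((nat \<Rightarrow> real) \<Rightarrow> real) \<Rightarrow> ennreal" where
  "neg_norm2 p n F =
     (\<integral>\<^sup>+ \<kappa>. ennreal ((\<Prod>j<n. 1 / (2 * real (\<kappa> j) + 2) ^ (2 * p)) * (herm_coeff n F \<kappa>)\<^sup>2)
        \<partial>count_space (PiE {..<n} (\<lambda>_. UNIV)))"

definition hida_dist :: "nat \<Rightarrow> kernels \<Rightarrow> bool" where
  "hida_dist d \<Phi> \<longleftrightarrow>
     (\<forall>m. m \<notin> multi_indices d \<longrightarrow> (\<forall>x. \<Phi> m x = 0)) \<and>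
     (\<forall>m \<in> multi_indices d. \<forall>\<kappa>.
        integrable (PiM {..<mabs d m} (\<lambda>_. lborel)) (\<lambda>x. \<Phi> m x * herm_test (mabs d m) \<kappa> x)) \<and>
     (\<exists>p::nat. (\<integral>\<^sup>+ m. ennreal (mfact d m) * neg_norm2 p (mabs d m) (\<Phi> m)
                     \<partial>count_space (multi_indices d)) < \<infinity>)"

text \<open>Kernel psi_{2n}(u_1..u_{2n}; t1, t2) of delta(B(t2)-B(t1)), indexed
  by the half multi-index n.\<close>
definition psi :: "nat \<Rightarrow> (nat \<Rightarrow> nat) \<Rightarrow> real \<Rightarrow> real \<Rightarrow> (nat \<Rightarrow> real) \<Rightarrow> real" where
  "psi d n t1 t2 x =
     (1 / mfact d n) * (2 * pi) powr (- (real d / 2))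
     * (t2 - t1) powr (- (real d / 2) - real (mabs d n)) * (- 1 / 2) ^ (mabs d n)
     * (\<Prod>k<2 * mabs d n. indicator {t1..t2} (x k))"

definition delta_trunc :: "nat \<Rightarrow> nat \<Rightarrow> real \<Rightarrow> real \<Rightarrow> kernels" where
  "delta_trunc d N t1 t2 m x =
     (if m \<in> multi_indices d \<and> (\<forall>i. even (m i)) \<and> mabs d m \<ge> 2 * N
      then psi d (\<lambda>i. m i div 2) t1 t2 x else 0)"

definition hida_integral :: "(real \<times> real) set \<Rightarrow> (real \<times> real \<Rightarrow> kernels) \<Rightarrow> kernels" where
  "hida_integral A \<Phi> = (\<lambda>m x. LINT t : A | lborel. \<Phi> t m x)"

definition SILT :: "nat \<Rightarrow> nat \<Rightarrow> real \<Rightarrow> kernels" where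
  "SILT d N T = hida_integral {(t1, t2). 0 < t1 \<and> t1 < t2 \<and> t2 < T}
                   (\<lambda>(t1, t2). delta_trunc d N t1 t2)"

definition SILT_gap :: "nat \<Rightarrow> nat \<Rightarrow> real \<Rightarrow> real \<Rightarrow> kernels" where
  "SILT_gap d N T \<Lambda> = hida_integral {(t1, t2). 0 < t1 \<and> t1 < t2 \<and> t2 < T \<and> t2 - t1 > \<Lambda>}
                   (\<lambda>(t1, t2). delta_trunc d N t1 t2)"

definition rho :: "nat \<Rightarrow> real \<Rightarrow> real \<Rightarrow> (nat \<Rightarrow> nat) \<Rightarrow> (nat \<Rightarrow> real) \<Rightarrow> real" where
  "rho d T \<Lambda> n x =
     (LINT t : {(t1, t2). 0 < t1 \<and> t1 \<le> kmin (2 * mabs d n) x \<and> kmax (2 * mabs d n) x \<le> t2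
                         \<and> t2 < T \<and> t2 - t1 < \<Lambda>} | lborel.
        psi d n (fst t) (snd t) x)"

end

theory Submission
  imports Defs "HOL-Probability.Distributions" "HOL-Real_Asymp.Real_Asymp"
begin

text \<open>
  For the even multi-index \<open>2n\<close> the kernel \<open>\<psi>\<close> of \<open>\<delta>(B(t\<^sub>2) - B(t\<^sub>1))\<close> equals
  \<open>C\<^sub>n (t\<^sub>2 - t\<^sub>1)\<^sup>-\<^sup>\<alpha>\<close>, \<open>\<alpha> = d/2 + |n|\<close>, on \<open>{t\<^sub>1 \<le> u, v \<le> t\<^sub>2}\<close> and vanishes elsewhere. Cutting the
  gap region out of the time simplex therefore removes exactly the integral over \<open>D\<close> when
  \<open>v - u < \<Lambda>\<close> (up to the null line \<open>t\<^sub>2 - t\<^sub>1 = \<Lambda>\<close>) and nothing otherwise, and \<open>\<rho>\<close> is computed by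
  Fubini and two elementary antiderivatives.

  On the gap region \<open>(t\<^sub>2 - t\<^sub>1)\<^sup>-\<^sup>\<alpha> \<le> \<Lambda>\<^sup>-\<^sup>\<alpha>\<close>, so the \<open>2n\<close>-kernel of \<open>L\<^sup>(\<^sup>2\<^sup>N\<^sup>)(\<Lambda>)\<close> is bounded by a
  constant times \<open>(2\<Lambda>)\<^sup>-\<^sup>|\<^sup>n\<^sup>| / n!\<close> on \<open>[0, T]\<^sup>2\<^sup>|\<^sup>n\<^sup>|\<close>. Every Hermite function has \<open>\<integral>\<^sub>0\<^sup>T |h\<^sub>k| \<le> (T + 1)/2\<close>, so the
  Hermite coefficients of that kernel are at most the same bound times \<open>((T + 1)/2)\<^sup>2\<^sup>|\<^sup>n\<^sup>|\<close>, while the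
  weights \<open>(2\<kappa> + 2)\<^sup>-\<^sup>2\<^sup>p\<close> of the \<open>S\<^sub>-\<^sub>p\<close> norm sum to \<open>O(4\<^sup>-\<^sup>p)\<close>. Together with \<open>(2n)! \<le> 4\<^sup>|\<^sup>n\<^sup>| (n!)\<^sup>2\<close>,
  a large \<open>p\<close> makes the series for the \<open>(S)\<^sub>-\<^sub>p\<close> norm geometric.
\<close>

section \<open>Hermite functions\<close>

lemma hermite_poly_Suc:
  "hermite_poly (Suc k) x = 2 * x * hermite_poly k x - 2 * real k * hermite_poly (k - 1) x"
  by (cases k) auto

lemma hermite_poly_has_real_derivative:
  "(hermite_poly k has_real_derivative 2 * real k * hermite_poly (k - 1) x) (at x)"
proof (induction k x rule: hermite_poly.induct)
  case (3 k x)
  have "hermite_poly (Suc (Suc k))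
      = (\<lambda>x. 2 * x * hermite_poly (Suc k) x - 2 * real (Suc k) * hermite_poly k x)"
    by auto
  moreover have "((\<lambda>x. 2 * x * hermite_poly (Suc k) x - 2 * real (Suc k) * hermite_poly k x)
      has_real_derivative 2 * hermite_poly (Suc k) x + 2 * x * (2 * real (Suc k) * hermite_poly k x)
        - 2 * real (Suc k) * (2 * real k * hermite_poly (k - 1) x)) (at x)"
    using "3.IH" by (auto intro!: derivative_eq_intros)
  moreover have "2 * hermite_poly (Suc k) x + 2 * x * (2 * real (Suc k) * hermite_poly k x)
        - 2 * real (Suc k) * (2 * real k * hermite_poly (k - 1) x)
      = 2 * real (Suc (Suc k)) * hermite_poly (Suc (Suc k) - 1) x"
    by (simp add: hermite_poly_Suc[of k x] algebra_simps)
  ultimately show ?case by (simp only:)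
qed (auto intro!: derivative_eq_intros)

lemma hermite_poly_polynomial_bound: "\<exists>M. \<forall>x. \<bar>hermite_poly k x\<bar> \<le> M * (1 + \<bar>x\<bar>) ^ k"
proof (induction k rule: less_induct)
  case (less k)
  consider "k = 0" | "k = 1" | j where "k = Suc (Suc j)"
    by (metis One_nat_def not0_implies_Suc)
  then show ?case
  proof cases
    case 3
    obtain M1 M2 where M1: "\<And>x. \<bar>hermite_poly j x\<bar> \<le> M1 * (1 + \<bar>x\<bar>) ^ j"
      and M2: "\<And>x. \<bar>hermite_poly (Suc j) x\<bar> \<le> M2 * (1 + \<bar>x\<bar>) ^ Suc j"
      using less.IH[of j] less.IH[of "Suc j"] 3 by (metis lessI less_SucI)
    have M_nonneg: "0 \<le> M1" "0 \<le> M2"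
      using M1[of 0] M2[of 0] by (auto intro: order_trans[OF abs_ge_zero])
    have "\<bar>hermite_poly k x\<bar> \<le> (2 * M2 + 2 * real (Suc j) * M1) * (1 + \<bar>x\<bar>) ^ k" for x
    proof -
      have "\<bar>hermite_poly k x\<bar>
          \<le> 2 * \<bar>x\<bar> * \<bar>hermite_poly (Suc j) x\<bar> + 2 * real (Suc j) * \<bar>hermite_poly j x\<bar>"
        using 3 abs_triangle_ineq4[of "2 * x * hermite_poly (Suc j) x" "2 * real (Suc j) * hermite_poly j x"]
        by (simp add: abs_mult)
      also have "\<dots> \<le> 2 * (1 + \<bar>x\<bar>) * (M2 * (1 + \<bar>x\<bar>) ^ Suc j)
          + 2 * real (Suc j) * (M1 * (1 + \<bar>x\<bar>) ^ Suc (Suc j))"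
        using M_nonneg by (intro add_mono mult_mono M1 M2 order_trans[OF M1]
            mult_left_mono power_increasing) auto
      finally show ?thesis using 3 by (simp add: algebra_simps)
    qed
    then show ?thesis by blast
  qed (auto intro!: exI[of _ 2])
qed

lemma continuous_on_hermite_poly [continuous_intros]: "continuous_on S (hermite_poly k)"
  by (meson continuous_at_imp_continuous_on DERIV_isCont hermite_poly_has_real_derivative)

lemma isCont_hermite_poly: "isCont (hermite_poly k) x"
  using DERIV_isCont hermite_poly_has_real_derivative by blast

lemma borel_measurable_hermite_poly [measurable]: "hermite_poly k \<in> borel_measurable borel"
  using borel_measurable_continuous_onI continuous_on_hermite_poly by blast

lemma normal_density_0_inverse_sqrt2: "normal_density 0 (1 / sqrt 2) x = exp (- x\<^sup>2) / sqrt pi"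
  by (simp add: normal_density_def power_divide)

lemma gaussian_integral: "(\<integral>x. exp (- x\<^sup>2) \<partial>lborel) = sqrt pi"
proof -
  have "(\<integral>x. exp (- x\<^sup>2) \<partial>lborel) = (\<integral>x. sqrt pi * normal_density 0 (1 / sqrt 2) x \<partial>lborel)"
    by (simp add: normal_density_0_inverse_sqrt2)
  then show ?thesis by simp
qed

lemma integrable_polynomial_weight_gaussian:
  "integrable lborel (\<lambda>x::real. (1 + \<bar>x\<bar>) ^ k * exp (- x\<^sup>2))"
proof (rule Bochner_Integration.integrable_bound)
  let ?\<phi> = "normal_density 0 (1 / sqrt 2)"
  show "integrable lborel (\<lambda>x. 2 ^ k * sqrt pi * (?\<phi> x + ?\<phi> x * \<bar>x - 0\<bar> ^ k))"
    by (intro integrable_mult_right Bochner_Integration.integrable_add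
        integrable_normal_moment_abs integrable_normal_density) auto
  have poly_le: "(1 + \<bar>x\<bar>) ^ k \<le> 2 ^ k * (1 + \<bar>x\<bar> ^ k)" for x :: real
  proof -
    have "(1 + \<bar>x\<bar>) ^ k \<le> (2 * max 1 \<bar>x\<bar>) ^ k" by (intro power_mono) auto
    also have "\<dots> \<le> 2 ^ k * (1 + \<bar>x\<bar> ^ k)"
      by (cases "\<bar>x\<bar> \<le> 1") (auto simp: max_def power_mult_distrib)
    finally show ?thesis .
  qed
  show "AE x in lborel. norm ((1 + \<bar>x\<bar>) ^ k * exp (- x\<^sup>2))
      \<le> norm (2 ^ k * sqrt pi * (?\<phi> x + ?\<phi> x * \<bar>x - 0\<bar> ^ k))"
  proof (rule AE_I2)
    fix x :: real
    have "(1 + \<bar>x\<bar>) ^ k * exp (- x\<^sup>2) \<le> 2 ^ k * (1 + \<bar>x\<bar> ^ k) * exp (- x\<^sup>2)"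
      by (rule mult_right_mono[OF poly_le]) simp
    also have "\<dots> = 2 ^ k * sqrt pi * (?\<phi> x + ?\<phi> x * \<bar>x - 0\<bar> ^ k)"
      by (simp add: normal_density_0_inverse_sqrt2 field_simps)
    finally show "norm ((1 + \<bar>x\<bar>) ^ k * exp (- x\<^sup>2))
        \<le> norm (2 ^ k * sqrt pi * (?\<phi> x + ?\<phi> x * \<bar>x - 0\<bar> ^ k))"
      by simp
  qed
qed measurable

lemma integrable_polynomially_bounded_gaussian:
  fixes P :: "real \<Rightarrow> real"
  assumes "P \<in> borel_measurable borel" and "\<And>x. \<bar>P x\<bar> \<le> M * (1 + \<bar>x\<bar>) ^ k"
  shows "integrable lborel (\<lambda>x. P x * exp (- x\<^sup>2))"
proof (rule Bochner_Integration.integrable_bound)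
  show "integrable lborel (\<lambda>x. M * ((1 + \<bar>x\<bar>) ^ k * exp (- x\<^sup>2)))"
    by (intro integrable_mult_right integrable_polynomial_weight_gaussian)
  show "AE x in lborel. norm (P x * exp (- x\<^sup>2)) \<le> norm (M * ((1 + \<bar>x\<bar>) ^ k * exp (- x\<^sup>2)))"
  proof (rule AE_I2)
    fix x :: real
    have "\<bar>P x\<bar> * exp (- x\<^sup>2) \<le> M * (1 + \<bar>x\<bar>) ^ k * exp (- x\<^sup>2)"
      by (rule mult_right_mono[OF assms(2)]) simp
    also have "\<dots> \<le> \<bar>M\<bar> * (1 + \<bar>x\<bar>) ^ k * exp (- x\<^sup>2)"
      by (intro mult_right_mono) auto
    finally show "norm (P x * exp (- x\<^sup>2)) \<le> norm (M * ((1 + \<bar>x\<bar>) ^ k * exp (- x\<^sup>2)))"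
      by (simp add: abs_mult mult.assoc)
  qed
qed (use assms(1) in measurable)

lemma polynomially_bounded_gaussian_tendsto_0:
  fixes P :: "real \<Rightarrow> real"
  assumes bound: "\<And>x. \<bar>P x\<bar> \<le> M * (1 + \<bar>x\<bar>) ^ k"
  shows "((\<lambda>x. P x * exp (- x\<^sup>2)) \<longlongrightarrow> 0) at_top"
    and "((\<lambda>x. P x * exp (- x\<^sup>2)) \<longlongrightarrow> 0) at_bot"
proof -
  define g where "g x = M * ((1 + \<bar>x\<bar>) ^ k * exp (- x\<^sup>2))" for x :: real
  have P_le_g: "\<bar>P x * exp (- x\<^sup>2)\<bar> \<le> g x" for x
    using mult_right_mono[OF bound, of "exp (- x\<^sup>2)" x] by (simp add: g_def abs_mult)
  have "((\<lambda>x::real. M * ((1 + x) ^ k * exp (- x\<^sup>2))) \<longlongrightarrow> 0) at_top"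
    by real_asymp
  then have g_top: "(g \<longlongrightarrow> 0) at_top"
    by (rule Lim_transform_eventually) (auto simp: g_def eventually_at_top_linorder intro!: exI[of _ 0])
  then show "((\<lambda>x. P x * exp (- x\<^sup>2)) \<longlongrightarrow> 0) at_top"
    by (rule Lim_null_comparison[rotated]) (simp add: P_le_g)
  have "(g \<longlongrightarrow> 0) at_bot"
    using g_top by (subst filterlim_at_bot_mirror) (simp add: g_def[abs_def])
  then show "((\<lambda>x. P x * exp (- x\<^sup>2)) \<longlongrightarrow> 0) at_bot"
    by (rule Lim_null_comparison[rotated]) (simp add: P_le_g)
qed

lemma hermite_poly_product_bound:
  "\<exists>M. \<forall>x. \<bar>hermite_poly a x * hermite_poly b x\<bar> \<le> M * (1 + \<bar>x\<bar>) ^ (a + b)"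
proof -
  obtain Ma Mb where Ma: "\<And>x. \<bar>hermite_poly a x\<bar> \<le> Ma * (1 + \<bar>x\<bar>) ^ a"
    and Mb: "\<And>x. \<bar>hermite_poly b x\<bar> \<le> Mb * (1 + \<bar>x\<bar>) ^ b"
    using hermite_poly_polynomial_bound by metis
  have "\<bar>hermite_poly a x * hermite_poly b x\<bar> \<le> (Ma * Mb) * (1 + \<bar>x\<bar>) ^ (a + b)" for x
  proof -
    have "\<bar>hermite_poly a x * hermite_poly b x\<bar> \<le> (Ma * (1 + \<bar>x\<bar>) ^ a) * (Mb * (1 + \<bar>x\<bar>) ^ b)"
      unfolding abs_mult by (intro mult_mono Ma Mb) (auto intro: order_trans[OF _ Ma])
    then show ?thesis by (simp add: power_add algebra_simps)
  qed
  then show ?thesis by blast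
qed

lemma integrable_hermite_poly_product_gaussian:
  "integrable lborel (\<lambda>x. hermite_poly a x * hermite_poly b x * exp (- x\<^sup>2))"
  using hermite_poly_product_bound[of a b] by (auto intro!: integrable_polynomially_bounded_gaussian)

lemma has_real_derivative_hermite_poly_product_gaussian:
  "((\<lambda>x. hermite_poly k x * hermite_poly (Suc k) x * exp (- x\<^sup>2)) has_real_derivative
      2 * real (Suc k) * (hermite_poly k x * hermite_poly k x * exp (- x\<^sup>2))
      - hermite_poly (Suc k) x * hermite_poly (Suc k) x * exp (- x\<^sup>2)) (at x)"
proof -
  have "((\<lambda>x. hermite_poly k x * hermite_poly (Suc k) x * exp (- x\<^sup>2)) has_real_derivative
      2 * real k * hermite_poly (k - 1) x * hermite_poly (Suc k) x * exp (- x\<^sup>2)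
      + hermite_poly k x * (2 * real (Suc k) * hermite_poly k x) * exp (- x\<^sup>2)
      + hermite_poly k x * hermite_poly (Suc k) x * (exp (- x\<^sup>2) * (- (2 * x)))) (at x)"
    using hermite_poly_has_real_derivative[of k x] hermite_poly_has_real_derivative[of "Suc k" x]
    by (auto intro!: derivative_eq_intros simp: power2_eq_square algebra_simps)
  then show ?thesis
    by (rule DERIV_cong) (simp add: hermite_poly_Suc[of k x] algebra_simps)
qed

text \<open>Integration by parts against the Gaussian weight; the boundary term
  \<open>H\<^sub>k H\<^sub>k\<^sub>+\<^sub>1 exp (- x\<^sup>2)\<close> vanishes at \<open>\<plusminus>\<infinity>\<close>.\<close>
lemma integral_hermite_poly_Suc_square:
  "(\<integral>x. hermite_poly (Suc k) x * hermite_poly (Suc k) x * exp (- x\<^sup>2) \<partial>lborel)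
    = 2 * real (Suc k) * (\<integral>x. hermite_poly k x * hermite_poly k x * exp (- x\<^sup>2) \<partial>lborel)"
proof -
  let ?G = "\<lambda>x. hermite_poly k x * hermite_poly (Suc k) x * exp (- x\<^sup>2)"
  let ?g = "\<lambda>x. 2 * real (Suc k) * (hermite_poly k x * hermite_poly k x * exp (- x\<^sup>2))
    - hermite_poly (Suc k) x * hermite_poly (Suc k) x * exp (- x\<^sup>2)"
  obtain M where M: "\<And>x. \<bar>hermite_poly k x * hermite_poly (Suc k) x\<bar> \<le> M * (1 + \<bar>x\<bar>) ^ (k + Suc k)"
    using hermite_poly_product_bound by blast
  have "(LBINT x=-\<infinity>..\<infinity>. ?g x) = 0 - 0"
  proof (rule interval_integral_FTC_integrable)
    show "(?G has_vector_derivative ?g x) (at x)" for x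
      using has_real_derivative_hermite_poly_product_gaussian
        has_real_derivative_iff_has_vector_derivative by blast
    show "isCont ?g x" for x
      using isCont_hermite_poly by (intro continuous_intros) auto
    show "set_integrable lborel (einterval (- \<infinity>) \<infinity>) ?g"
      by (simp add: set_integrable_def Bochner_Integration.integrable_diff integrable_mult_right
          integrable_hermite_poly_product_gaussian)
    show "((?G \<circ> real_of_ereal) \<longlongrightarrow> 0) (at_right (- \<infinity>))"
      unfolding ereal_tendsto_simps1
      using polynomially_bounded_gaussian_tendsto_0(2)[OF M] by (simp add: mult.assoc)
    show "((?G \<circ> real_of_ereal) \<longlongrightarrow> 0) (at_left \<infinity>)"
      unfolding ereal_tendsto_simps1
      using polynomially_bounded_gaussian_tendsto_0(1)[OF M] by (simp add: mult.assoc)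
  qed simp
  then have "(\<integral>x. ?g x \<partial>lborel) = 0"
    by (simp add: interval_lebesgue_integral_def set_lebesgue_integral_def)
  then show ?thesis
    by (subst (asm) Bochner_Integration.integral_diff)
      (auto intro: integrable_hermite_poly_product_gaussian)
qed

lemma hermite_poly_norm:
  "(\<integral>x. (hermite_poly k x)\<^sup>2 * exp (- x\<^sup>2) \<partial>lborel) = 2 ^ k * fact k * sqrt pi"
proof (induction k)
  case 0
  then show ?case using gaussian_integral by simp
next
  case (Suc k)
  then show ?case
    using integral_hermite_poly_Suc_square[of k] by (simp add: power2_eq_square algebra_simps)
qed

lemma hermite_fun_square:
  "(hermite_fun k x)\<^sup>2 = (hermite_poly k x)\<^sup>2 * exp (- x\<^sup>2) / (2 ^ k * fact k * sqrt pi)"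
  by (simp add: hermite_fun_def power_divide power_mult_distrib flip: exp_add)
    (simp add: power2_eq_square mult_exp_exp)

lemma integrable_hermite_fun_square: "integrable lborel (\<lambda>x. (hermite_fun k x)\<^sup>2)"
  using integrable_divide[OF integrable_hermite_poly_product_gaussian[of k k], of "2 ^ k * fact k * sqrt pi"]
  by (simp only: hermite_fun_square) (simp add: power2_eq_square)

lemma integral_hermite_fun_square: "(\<integral>x. (hermite_fun k x)\<^sup>2 \<partial>lborel) = 1"
  unfolding hermite_fun_square by (simp add: hermite_poly_norm)

lemma continuous_on_hermite_fun [continuous_intros]: "continuous_on S (hermite_fun k)"
  unfolding hermite_fun_def by (intro continuous_intros) auto

lemma borel_measurable_hermite_fun [measurable]: "hermite_fun k \<in> borel_measurable borel"
  unfolding hermite_fun_def by measurable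

lemma set_integrable_abs_hermite_fun: "set_integrable lborel {0..T} (\<lambda>x. \<bar>hermite_fun k x\<bar>)"
  by (intro borel_integrable_atLeastAtMost' continuous_intros)

text \<open>From \<open>\<bar>h\<bar> \<le> (1 + h\<^sup>2) / 2\<close> and the \<open>L\<^sup>2\<close>-normalisation of the Hermite functions; this bound
  is uniform in the degree.\<close>
lemma set_integral_abs_hermite_fun_le:
  assumes "0 \<le> T"
  shows "(LINT x:{0..T}|lborel. \<bar>hermite_fun k x\<bar>) \<le> (T + 1) / 2"
proof -
  have sq_int: "set_integrable lborel {0..T} (\<lambda>x. (hermite_fun k x)\<^sup>2)"
    by (intro borel_integrable_atLeastAtMost' continuous_intros)
  have one_int: "set_integrable lborel {0..T} (\<lambda>x. 1::real)"
    by (intro borel_integrable_atLeastAtMost' continuous_intros)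
  have "(LINT x:{0..T}|lborel. \<bar>hermite_fun k x\<bar>)
      \<le> (LINT x:{0..T}|lborel. (1 + (hermite_fun k x)\<^sup>2) / 2)"
  proof (rule set_integral_mono[OF set_integrable_abs_hermite_fun])
    show "set_integrable lborel {0..T} (\<lambda>x. (1 + (hermite_fun k x)\<^sup>2) / 2)"
      by (intro borel_integrable_atLeastAtMost' continuous_intros) auto
    fix x :: real
    have "0 \<le> (\<bar>hermite_fun k x\<bar> - 1)\<^sup>2" by simp
    then show "\<bar>hermite_fun k x\<bar> \<le> (1 + (hermite_fun k x)\<^sup>2) / 2"
      by (simp add: power2_eq_square algebra_simps)
  qed
  also have "\<dots> = ((LINT x:{0..T}|lborel. 1) + (LINT x:{0..T}|lborel. (hermite_fun k x)\<^sup>2)) / 2"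
    using one_int sq_int
    by (simp add: set_integrable_def set_lebesgue_integral_def distrib_left
        Bochner_Integration.integral_add[symmetric])
  also have "(LINT x:{0..T}|lborel. (1::real)) = T"
    using assms by (simp add: set_integral_const)
  also have "(LINT x:{0..T}|lborel. (hermite_fun k x)\<^sup>2) \<le> (\<integral>x. (hermite_fun k x)\<^sup>2 \<partial>lborel)"
    unfolding set_lebesgue_integral_def using sq_int integrable_hermite_fun_square
    by (intro integral_mono) (auto simp: set_integrable_def indicator_def)
  finally show ?thesis by (simp add: integral_hermite_fun_square)
qed

section \<open>Hermite coefficients and dual Sobolev norms\<close>

lemma herm_coeff_of_bounded_kernel:
  fixes F :: "(nat \<Rightarrow> real) \<Rightarrow> real"
  assumes F_meas: "F \<in> borel_measurable (PiM {..<K} (\<lambda>_. lborel))"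
    and F_bound: "\<And>x. \<bar>F x\<bar> \<le> B * (\<Prod>j<K. indicator {0..T} (x j))"
    and "0 \<le> T" and "0 \<le> B"
  shows "integrable (PiM {..<K} (\<lambda>_. lborel)) (\<lambda>x. F x * herm_test K \<kappa> x)"
    and "\<bar>herm_coeff K F \<kappa>\<bar> \<le> B * ((T + 1) / 2) ^ K"
proof -
  interpret product_sigma_finite "\<lambda>_::nat. lborel :: real measure" by standard
  define g where "g j y = indicator {0..T} y * \<bar>hermite_fun (\<kappa> j) y\<bar>" for j and y :: real
  have g_int: "integrable lborel (g j)" for j
    using set_integrable_abs_hermite_fun[of T "\<kappa> j"] by (simp add: set_integrable_def g_def[abs_def])
  have majorant_int: "integrable (PiM {..<K} (\<lambda>_. lborel)) (\<lambda>x. B * (\<Prod>j\<in>{..<K}. g j (x j)))"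
    by (intro integrable_mult_right product_integrable_prod g_int) auto
  have majorant: "\<bar>F x * herm_test K \<kappa> x\<bar> \<le> B * (\<Prod>j\<in>{..<K}. g j (x j))" for x
  proof -
    have "\<bar>F x * herm_test K \<kappa> x\<bar> = \<bar>F x\<bar> * (\<Prod>j<K. \<bar>hermite_fun (\<kappa> j) (x j)\<bar>)"
      by (simp add: herm_test_def abs_mult abs_prod)
    also have "\<dots> \<le> B * (\<Prod>j<K. indicator {0..T} (x j)) * (\<Prod>j<K. \<bar>hermite_fun (\<kappa> j) (x j)\<bar>)"
      by (intro mult_right_mono F_bound) (auto intro: prod_nonneg)
    finally show ?thesis
      by (simp add: g_def prod.distrib mult.assoc)
  qed
  show integrable: "integrable (PiM {..<K} (\<lambda>_. lborel)) (\<lambda>x. F x * herm_test K \<kappa> x)"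
  proof (rule Bochner_Integration.integrable_bound[OF majorant_int])
    show "(\<lambda>x. F x * herm_test K \<kappa> x) \<in> borel_measurable (PiM {..<K} (\<lambda>_. lborel))"
      using F_meas unfolding herm_test_def by measurable
  qed (use majorant in \<open>auto intro: order_trans[OF _ abs_ge_self]\<close>)
  have "\<bar>herm_coeff K F \<kappa>\<bar> \<le> (\<integral>x. \<bar>F x * herm_test K \<kappa> x\<bar> \<partial>PiM {..<K} (\<lambda>_. lborel))"
    unfolding herm_coeff_def by (rule integral_abs_bound)
  also have "\<dots> \<le> (\<integral>x. B * (\<Prod>j\<in>{..<K}. g j (x j)) \<partial>PiM {..<K} (\<lambda>_. lborel))"
    using integrable majorant_int majorant by (intro integral_mono) auto
  also have "\<dots> = B * (\<Prod>j\<in>{..<K}. integral\<^sup>L lborel (g j))"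
    using g_int by (simp add: product_integral_prod)
  also have "\<dots> \<le> B * (\<Prod>j\<in>{..<K}. (T + 1) / 2)"
  proof (intro mult_left_mono prod_mono conjI \<open>0 \<le> B\<close>)
    fix j
    show "0 \<le> integral\<^sup>L lborel (g j)"
      unfolding g_def by (intro integral_nonneg_AE) auto
    show "integral\<^sup>L lborel (g j) \<le> (T + 1) / 2"
      using set_integral_abs_hermite_fun_le[OF \<open>0 \<le> T\<close>, of "\<kappa> j"]
      by (simp add: g_def[abs_def] set_lebesgue_integral_def)
  qed
  finally show "\<bar>herm_coeff K F \<kappa>\<bar> \<le> B * ((T + 1) / 2) ^ K" by simp
qed

lemma nn_integral_prod_PiE:
  fixes f :: "nat \<Rightarrow> ennreal"
  shows "(\<integral>\<^sup>+ \<kappa>. (\<Prod>j<K. f (\<kappa> j)) \<partial>count_space (PiE {..<K} (\<lambda>_. UNIV)))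
    = (\<integral>\<^sup>+ k. f k \<partial>count_space UNIV) ^ K"
proof -
  interpret product_sigma_finite "\<lambda>_::nat. count_space (UNIV::nat set)"
    by (intro product_sigma_finite.intro sigma_finite_measure_count_space_countable) simp
  have "count_space (PiE {..<K} (\<lambda>_. UNIV::nat set)) = PiM {..<K} (\<lambda>_. count_space UNIV)"
    by (rule count_space_PiM_finite[symmetric]) auto
  then have "(\<integral>\<^sup>+ \<kappa>. (\<Prod>j<K. f (\<kappa> j)) \<partial>count_space (PiE {..<K} (\<lambda>_. UNIV)))
      = (\<integral>\<^sup>+ \<kappa>. (\<Prod>j\<in>{..<K}. f (\<kappa> j)) \<partial>PiM {..<K} (\<lambda>_. count_space UNIV))"
    by simp
  also have "\<dots> = (\<Prod>j\<in>{..<K}. \<integral>\<^sup>+ k. f k \<partial>count_space UNIV)"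
    by (rule product_nn_integral_prod) auto
  finally show ?thesis by simp
qed

lemma nn_integral_prod_multi_indices:
  fixes f :: "nat \<Rightarrow> ennreal"
  shows "(\<integral>\<^sup>+ m. (\<Prod>i<d. f (m i)) \<partial>count_space (multi_indices d))
    = (\<integral>\<^sup>+ k. f k \<partial>count_space UNIV) ^ d"
proof -
  let ?ext = "\<lambda>\<kappa> i. if i < d then \<kappa> i else 0"
  have "bij_betw ?ext (PiE {..<d} (\<lambda>_. UNIV::nat set)) (multi_indices d)"
  proof (rule bij_betwI[where g="\<lambda>m. restrict m {..<d}"])
    show "restrict (?ext \<kappa>) {..<d} = \<kappa>" if "\<kappa> \<in> PiE {..<d} (\<lambda>_. UNIV::nat set)" for \<kappa>
      using that by (auto simp: fun_eq_iff PiE_def extensional_def)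
  qed (auto simp: multi_indices_def fun_eq_iff)
  then have "(\<integral>\<^sup>+ m. (\<Prod>i<d. f (m i)) \<partial>count_space (multi_indices d))
      = (\<integral>\<^sup>+ \<kappa>. (\<Prod>i<d. f (?ext \<kappa> i)) \<partial>count_space (PiE {..<d} (\<lambda>_. UNIV)))"
    by (rule nn_integral_bij_count_space[symmetric])
  also have "\<dots> = (\<integral>\<^sup>+ \<kappa>. (\<Prod>i<d. f (\<kappa> i)) \<partial>count_space (PiE {..<d} (\<lambda>_. UNIV)))"
    by (intro nn_integral_cong prod.cong) auto
  finally show ?thesis by (simp add: nn_integral_prod_PiE[where f=f])
qed

lemma nn_integral_geometric_half: "(\<integral>\<^sup>+ k. ennreal ((1 / 2::real) ^ k) \<partial>count_space UNIV) = 2"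
proof -
  have "(\<integral>\<^sup>+ k. ennreal ((1 / 2::real) ^ k) \<partial>count_space UNIV) = ennreal (\<Sum>k. (1 / 2::real) ^ k)"
    by (simp add: nn_integral_count_space_nat suminf_ennreal2 summable_geometric)
  also have "(\<Sum>k. (1 / 2::real) ^ k) = 2"
    using suminf_geometric[of "1 / 2::real"] by simp
  finally show ?thesis by simp
qed

lemma neg_norm2_le_of_herm_coeff_bound:
  assumes "\<And>\<kappa>. \<bar>herm_coeff K F \<kappa>\<bar> \<le> M"
  shows "neg_norm2 p K F
    \<le> ennreal (M\<^sup>2) * (\<integral>\<^sup>+ k. ennreal (1 / (2 * real k + 2) ^ (2 * p)) \<partial>count_space UNIV) ^ K"
proof -
  let ?w = "\<lambda>k::nat. 1 / (2 * real k + 2) ^ (2 * p)"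
  have "neg_norm2 p K F
      \<le> (\<integral>\<^sup>+ \<kappa>. ennreal (M\<^sup>2) * (\<Prod>j<K. ennreal (?w (\<kappa> j))) \<partial>count_space (PiE {..<K} (\<lambda>_. UNIV)))"
    unfolding neg_norm2_def
  proof (rule nn_integral_mono)
    fix \<kappa> :: "nat \<Rightarrow> nat"
    have w_nonneg: "0 \<le> (\<Prod>j<K. ?w (\<kappa> j))" by (intro prod_nonneg) auto
    have "(herm_coeff K F \<kappa>)\<^sup>2 \<le> M\<^sup>2"
      using assms[of \<kappa>] by (metis abs_ge_zero abs_le_square_iff abs_of_nonneg order_trans power2_abs)
    then have "(\<Prod>j<K. ?w (\<kappa> j)) * (herm_coeff K F \<kappa>)\<^sup>2 \<le> M\<^sup>2 * (\<Prod>j<K. ?w (\<kappa> j))"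
      using mult_right_mono[OF _ w_nonneg] by (simp add: mult.commute)
    then have "ennreal ((\<Prod>j<K. ?w (\<kappa> j)) * (herm_coeff K F \<kappa>)\<^sup>2)
        \<le> ennreal (M\<^sup>2) * ennreal (\<Prod>j<K. ?w (\<kappa> j))"
      using w_nonneg by (simp add: ennreal_leI flip: ennreal_mult)
    then show "ennreal ((\<Prod>j<K. ?w (\<kappa> j)) * (herm_coeff K F \<kappa>)\<^sup>2)
        \<le> ennreal (M\<^sup>2) * (\<Prod>j<K. ennreal (?w (\<kappa> j)))"
      by (simp add: prod_ennreal)
  qed
  also have "\<dots> = ennreal (M\<^sup>2) * (\<integral>\<^sup>+ k. ennreal (?w k) \<partial>count_space UNIV) ^ K"
    by (simp add: nn_integral_cmult nn_integral_prod_PiE[where f="\<lambda>k. ennreal (?w k)"])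
  finally show ?thesis .
qed

lemma sobolev_weight_sum_small:
  fixes \<epsilon> :: real
  assumes "0 < \<epsilon>"
  shows "\<exists>p. (\<integral>\<^sup>+ k. ennreal (1 / (2 * real k + 2) ^ (2 * p)) \<partial>count_space UNIV) \<le> ennreal \<epsilon>"
proof -
  let ?Z = "\<Sum>k. 1 / (real k + 1)\<^sup>2"
  have summable: "summable (\<lambda>k. 1 / (real k + 1)\<^sup>2)"
  proof -
    have "summable (\<lambda>k. inverse (real (Suc k) ^ 2))"
      using inverse_power_summable[of 2, where 'a=real] by (subst summable_Suc_iff) simp
    then show ?thesis by (simp add: field_simps add.commute)
  qed
  obtain q :: nat where "?Z / \<epsilon> < 4 ^ q"
    using real_arch_pow[of 4] by auto
  define p where "p = Suc q"
  have "?Z < \<epsilon> * 4 ^ q"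
    using \<open>?Z / \<epsilon> < 4 ^ q\<close> \<open>0 < \<epsilon>\<close> by (simp add: field_simps)
  also have "\<dots> \<le> \<epsilon> * 4 ^ p"
    using \<open>0 < \<epsilon>\<close> by (intro mult_left_mono power_increasing) (auto simp: p_def)
  finally have "?Z / 4 ^ p \<le> \<epsilon>"
    by (simp add: field_simps)
  have le: "1 / (2 * real k + 2) ^ (2 * p) \<le> 1 / 4 ^ p * (1 / (real k + 1)\<^sup>2)" for k
  proof -
    have "(2 * real k + 2) ^ (2 * p) = 4 ^ p * ((real k + 1)\<^sup>2) ^ p"
      by (simp add: power_mult power_mult_distrib[symmetric] algebra_simps power2_eq_square)
    moreover have "(real k + 1)\<^sup>2 \<le> ((real k + 1)\<^sup>2) ^ p"
      using power_increasing[of 1 p "(real k + 1)\<^sup>2"] by (simp add: p_def)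
    ultimately show ?thesis by (simp add: divide_simps)
  qed
  have "(\<integral>\<^sup>+ k. ennreal (1 / (2 * real k + 2) ^ (2 * p)) \<partial>count_space UNIV)
      = (\<Sum>k. ennreal (1 / (2 * real k + 2) ^ (2 * p)))"
    by (rule nn_integral_count_space_nat)
  also have "\<dots> \<le> (\<Sum>k. ennreal (1 / 4 ^ p * (1 / (real k + 1)\<^sup>2)))"
    by (intro suminf_le ennreal_leI le) auto
  also have "\<dots> = ennreal (\<Sum>k. 1 / 4 ^ p * (1 / (real k + 1)\<^sup>2))"
    by (intro suminf_ennreal2 summable_mult summable) simp
  also have "(\<Sum>k. 1 / 4 ^ p * (1 / (real k + 1)\<^sup>2)) = ?Z / 4 ^ p"
    using suminf_mult[OF summable, of "1 / 4 ^ p"] by simp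
  also have "ennreal (?Z / 4 ^ p) \<le> ennreal \<epsilon>"
    using \<open>?Z / 4 ^ p \<le> \<epsilon>\<close> by (rule ennreal_leI)
  finally show ?thesis by blast
qed

lemma fact_double_le: "fact (2 * a) \<le> (4::real) ^ a * (fact a)\<^sup>2"
proof (induction a)
  case (Suc a)
  have "fact (2 * Suc a) = (real (2 * a) + 2) * (real (2 * a) + 1) * (fact (2 * a) :: real)"
    by (simp add: fact_Suc algebra_simps)
  also have "\<dots> \<le> (4 * (real a + 1)\<^sup>2) * (4 ^ a * (fact a)\<^sup>2)"
  proof (rule mult_mono[OF _ Suc])
    show "(real (2 * a) + 2) * (real (2 * a) + 1) \<le> 4 * (real a + 1)\<^sup>2"
      by (simp add: power2_eq_square algebra_simps)
  qed auto
  also have "\<dots> = 4 ^ Suc a * (fact (Suc a))\<^sup>2"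
    by (simp add: fact_Suc power2_eq_square algebra_simps)
  finally show ?case .
qed simp

lemma mfact_double_le: "mfact d (\<lambda>i. 2 * n i) \<le> 4 ^ mabs d n * (mfact d n)\<^sup>2"
proof -
  have "mfact d (\<lambda>i. 2 * n i) \<le> (\<Prod>i<d. 4 ^ n i * (fact (n i))\<^sup>2)"
    unfolding mfact_def by (intro prod_mono conjI fact_double_le) auto
  also have "\<dots> = 4 ^ mabs d n * (mfact d n)\<^sup>2"
    by (simp add: prod.distrib mfact_def mabs_def power_sum prod_power_distrib)
  finally show ?thesis .
qed

lemma mfact_pos: "0 < mfact d n"
  by (simp add: mfact_def prod_pos)

section \<open>The kernel of the Donsker delta\<close>

definition psi_coeff :: "nat \<Rightarrow> (nat \<Rightarrow> nat) \<Rightarrow> real" where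
  "psi_coeff d n = 1 / mfact d n * (2 * pi) powr (- (real d / 2)) * (- 1 / 2) ^ mabs d n"

definition psi_exponent :: "nat \<Rightarrow> (nat \<Rightarrow> nat) \<Rightarrow> real" where
  "psi_exponent d n = real d / 2 + real (mabs d n)"

lemma mabs_double: "mabs d (\<lambda>i. 2 * n i) = 2 * mabs d n"
  by (simp add: mabs_def sum_distrib_left)

lemma double_in_multi_indices: "n \<in> multi_indices d \<Longrightarrow> (\<lambda>i. 2 * n i) \<in> multi_indices d"
  by (simp add: multi_indices_def)

lemma prod_indicator_Icc_eq_kmin_kmax:
  assumes "0 < K"
  shows "(\<Prod>k<K. indicator {t1..t2} (x k) :: real) = (if t1 \<le> kmin K x \<and> kmax K x \<le> t2 then 1 else 0)"
proof -
  have "x ` {..<K} \<noteq> {}" using assms by auto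
  then have "(t1 \<le> kmin K x \<and> kmax K x \<le> t2) \<longleftrightarrow> (\<forall>k<K. x k \<in> {t1..t2})"
    unfolding kmin_def kmax_def by auto
  moreover have "(\<Prod>k<K. indicator {t1..t2} (x k) :: real) = (if \<forall>k<K. x k \<in> {t1..t2} then 1 else 0)"
    by (auto simp: indicator_def)
  ultimately show ?thesis by simp
qed

lemma psi_eq_coeff_powr:
  assumes "0 < mabs d n"
  shows "psi d n t1 t2 x = psi_coeff d n * (t2 - t1) powr (- psi_exponent d n)
    * (if t1 \<le> kmin (2 * mabs d n) x \<and> kmax (2 * mabs d n) x \<le> t2 then 1 else 0)"
proof -
  have K: "0 < 2 * mabs d n" using assms by simp
  have e: "- (real d / 2) - real (mabs d n) = - psi_exponent d n"
    by (simp add: psi_exponent_def)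
  show ?thesis
    unfolding psi_def psi_coeff_def prod_indicator_Icc_eq_kmin_kmax[OF K] e by (simp add: algebra_simps)
qed

lemma psi_exponent_ge_1: "0 < mabs d n \<Longrightarrow> 1 \<le> psi_exponent d n"
  unfolding psi_exponent_def by simp

lemma abs_psi_le_spread:
  assumes "0 < mabs d n" and "kmin (2 * mabs d n) x < kmax (2 * mabs d n) x"
  shows "\<bar>psi d n t1 t2 x\<bar>
    \<le> \<bar>psi_coeff d n\<bar> * (kmax (2 * mabs d n) x - kmin (2 * mabs d n) x) powr (- psi_exponent d n)"
proof (cases "t1 \<le> kmin (2 * mabs d n) x \<and> kmax (2 * mabs d n) x \<le> t2")
  case True
  then have "(t2 - t1) powr (- psi_exponent d n)
      \<le> (kmax (2 * mabs d n) x - kmin (2 * mabs d n) x) powr (- psi_exponent d n)"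
    using assms psi_exponent_ge_1[OF assms(1)] by (intro powr_mono2') auto
  then show ?thesis
    using assms True by (simp add: psi_eq_coeff_powr abs_mult mult_left_mono)
qed (use assms in \<open>auto simp: psi_eq_coeff_powr\<close>)

lemma abs_psi_le_gap:
  assumes "0 < mabs d n" and "0 < \<Lambda>" and "\<Lambda> < t2 - t1"
  shows "\<bar>psi d n t1 t2 x\<bar> \<le> \<bar>psi_coeff d n\<bar> * \<Lambda> powr (- psi_exponent d n)"
proof -
  have "(t2 - t1) powr (- psi_exponent d n) \<le> \<Lambda> powr (- psi_exponent d n)"
    using assms psi_exponent_ge_1[OF assms(1)] by (intro powr_mono2') auto
  then show ?thesis
    using assms by (simp add: psi_eq_coeff_powr abs_mult mult_left_mono)
qed

lemma psi_eq_0_outside: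
  assumes "k < 2 * mabs d n" and "x k < t1 \<or> t2 < x k"
  shows "psi d n t1 t2 x = 0"
proof -
  have "(\<Prod>k<2 * mabs d n. indicator {t1..t2} (x k) :: real) = 0"
    using assms by (intro prod_zero) (auto simp: indicator_def intro!: bexI[of _ k])
  then show ?thesis by (simp add: psi_def)
qed

lemma psi_eq_prod_if:
  "psi d n t1 t2 x = 1 / mfact d n * (2 * pi) powr (- (real d / 2))
    * (t2 - t1) powr (- (real d / 2) - real (mabs d n)) * (- 1 / 2) ^ mabs d n
    * (\<Prod>k<2 * mabs d n. if t1 \<le> x k \<and> x k \<le> t2 then 1 else 0)"
  unfolding psi_def by (intro arg_cong2[where f="(*)"] refl prod.cong) (auto simp: indicator_def)

lemma borel_measurable_psi_times:
  "(\<lambda>t. psi d n (fst t) (snd t) x) \<in> borel_measurable lborel"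
proof -
  have "(\<lambda>t. psi d n (fst t) (snd t) x) \<in> borel_measurable (lborel \<Otimes>\<^sub>M lborel)"
    unfolding psi_eq_prod_if by measurable
  then show ?thesis by (simp add: lborel_prod)
qed

lemma borel_measurable_psi_joint:
  "(\<lambda>(x, t). psi d n (fst t) (snd t) x)
    \<in> borel_measurable (PiM {..<2 * mabs d n} (\<lambda>_. lborel) \<Otimes>\<^sub>M (lborel :: (real \<times> real) measure))"
proof -
  let ?M = "PiM {..<2 * mabs d n} (\<lambda>_. lborel) \<Otimes>\<^sub>M (lborel \<Otimes>\<^sub>M lborel)
    :: ((nat \<Rightarrow> real) \<times> real \<times> real) measure"
  have "(\<lambda>p. if fst (snd p) \<le> fst p k \<and> fst p k \<le> snd (snd p) then 1 else 0::real) \<in> borel_measurable ?M"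
    if "k \<in> {..<2 * mabs d n}" for k
    using that by measurable
  then have "(\<lambda>p. \<Prod>k<2 * mabs d n. if fst (snd p) \<le> fst p k \<and> fst p k \<le> snd (snd p) then 1 else 0::real)
      \<in> borel_measurable ?M"
    by (rule borel_measurable_prod)
  moreover have "(\<lambda>p. (snd (snd p) - fst (snd p)) powr (- (real d / 2) - real (mabs d n)))
      \<in> borel_measurable ?M"
    by measurable
  ultimately have "(\<lambda>p. psi d n (fst (snd p)) (snd (snd p)) (fst p)) \<in> borel_measurable ?M"
    unfolding psi_eq_prod_if by (intro borel_measurable_times borel_measurable_const)
  then show ?thesis by (simp add: case_prod_unfold lborel_prod)
qed

section \<open>Removing the gap\<close>

lemma sets_lborel_pair_Collect:
  "Measurable.pred (lborel \<Otimes>\<^sub>M lborel) P \<Longrightarrow> {t::real \<times> real. P t} \<in> sets lborel"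
  unfolding pred_def lborel_prod by simp

lemma AE_lborel_pair_not_on_line: "AE t in lborel. snd t - fst t \<noteq> (c::real)"
proof -
  have S: "{t::real \<times> real. snd t - fst t = c} \<in> sets (lborel \<Otimes>\<^sub>M lborel)"
    unfolding lborel_prod by (rule sets_lborel_pair_Collect) measurable
  have "emeasure (lborel \<Otimes>\<^sub>M lborel) {t::real \<times> real. snd t - fst t = c}
      = (\<integral>\<^sup>+ s. emeasure lborel (Pair s -` {t::real \<times> real. snd t - fst t = c}) \<partial>lborel)"
    by (rule lborel.emeasure_pair_measure_alt[OF S])
  also have "\<dots> = (\<integral>\<^sup>+ s. emeasure lborel {s + c} \<partial>lborel)"
    by (intro nn_integral_cong arg_cong[where f="emeasure lborel"]) auto
  finally have "{t::real \<times> real. snd t - fst t = c} \<in> null_sets (lborel \<Otimes>\<^sub>M lborel)"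
    using S by (simp add: null_sets_def)
  then have "{t::real \<times> real. snd t - fst t = c} \<in> null_sets lborel"
    by (simp add: lborel_prod)
  from AE_not_in[OF this] show ?thesis by simp
qed

lemma emeasure_lborel_subset_square_finite:
  assumes "A \<subseteq> {0..T} \<times> {0..T}"
  shows "emeasure lborel (A :: (real \<times> real) set) < \<infinity>"
proof -
  have "A \<subseteq> cbox (0, 0) (T, T)"
    using assms by (auto simp: cbox_Pair_eq)
  then have "emeasure lborel A \<le> emeasure lborel (cbox (0::real, 0::real) (T, T))"
    by (intro emeasure_mono) auto
  then show ?thesis
    using emeasure_lborel_cbox_finite le_less_trans by blast
qed

lemma set_integrable_bounded:
  fixes f :: "'a::euclidean_space \<Rightarrow> real"
  assumes "f \<in> borel_measurable lborel" and "\<And>t. \<bar>f t\<bar> \<le> c"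
    and "S \<in> sets lborel" and "emeasure lborel S < \<infinity>"
  shows "set_integrable lborel S f"
proof (rule set_integrable_bound[where f="\<lambda>_. c"])
  show "set_integrable lborel S (\<lambda>_. c)"
    unfolding set_integrable_def using assms(3,4)
    by (intro integrable_scaleR_left integrable_real_indicator) auto
  show "set_borel_measurable lborel S f"
    using assms(1,3) unfolding set_borel_measurable_def by measurable
qed (use assms(2) in \<open>auto intro: order_trans[OF _ abs_ge_self]\<close>)

lemma set_integral_Diff_subset:
  fixes f :: "_ \<Rightarrow> _ :: {banach, second_countable_topology}"
  assumes "set_integrable M A f" and "B \<subseteq> A" and "A \<in> sets M" and "B \<in> sets M"
  shows "(LINT x:A|M. f x) = (LINT x:B|M. f x) + (LINT x:A - B|M. f x)"
proof -
  have "(LINT x:A|M. f x) = (LINT x:B \<union> (A - B)|M. f x)"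
    using \<open>B \<subseteq> A\<close> by (simp add: Un_absorb1)
  also have "\<dots> = (LINT x:B|M. f x) + (LINT x:A - B|M. f x)"
    using assms by (intro set_integral_Un set_integrable_subset[OF assms(1)]) auto
  finally show ?thesis .
qed

definition time_simplex :: "real \<Rightarrow> (real \<times> real) set" where
  "time_simplex T = {t. 0 < fst t \<and> fst t < snd t \<and> snd t < T}"

definition gap_region :: "real \<Rightarrow> real \<Rightarrow> (real \<times> real) set" where
  "gap_region T \<Lambda> = {t. 0 < fst t \<and> fst t < snd t \<and> snd t < T \<and> \<Lambda> < snd t - fst t}"

definition rho_domain :: "real \<Rightarrow> real \<Rightarrow> real \<Rightarrow> real \<Rightarrow> (real \<times> real) set" where
  "rho_domain T \<Lambda> u v = {t. 0 < fst t \<and> fst t \<le> u \<and> v \<le> snd t \<and> snd t < T \<and> snd t - fst t < \<Lambda>}"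

lemma sets_time_simplex: "time_simplex T \<in> sets lborel"
  and sets_gap_region: "gap_region T \<Lambda> \<in> sets lborel"
  and sets_rho_domain: "rho_domain T \<Lambda> u v \<in> sets lborel"
  unfolding time_simplex_def gap_region_def rho_domain_def
  by (rule sets_lborel_pair_Collect; measurable)+

lemma SILT_double:
  assumes "n \<in> multi_indices d" and "N \<le> mabs d n"
  shows "SILT d N T (\<lambda>i. 2 * n i) x = (LINT t:time_simplex T|lborel. psi d n (fst t) (snd t) x)"
  using assms unfolding SILT_def hida_integral_def delta_trunc_def time_simplex_def
  by (simp add: case_prod_unfold double_in_multi_indices mabs_double)

lemma SILT_gap_double:
  assumes "n \<in> multi_indices d" and "N \<le> mabs d n"
  shows "SILT_gap d N T \<Lambda> (\<lambda>i. 2 * n i) x = (LINT t:gap_region T \<Lambda>|lborel. psi d n (fst t) (snd t) x)"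
  using assms unfolding SILT_gap_def hida_integral_def delta_trunc_def gap_region_def
  by (simp add: case_prod_unfold double_in_multi_indices mabs_double)

lemma rho_eq_set_integral:
  "rho d T \<Lambda> n x = (LINT t:rho_domain T \<Lambda> (kmin (2 * mabs d n) x) (kmax (2 * mabs d n) x)|lborel.
    psi d n (fst t) (snd t) x)"
  unfolding rho_def rho_domain_def by (simp add: case_prod_unfold)

lemma SILT_kernels_eq_0:
  assumes "(\<exists>i. odd (m i)) \<or> mabs d m < 2 * N"
  shows "SILT d N T m x = 0" and "SILT_gap d N T \<Lambda> m x = 0"
proof -
  have "delta_trunc d N t1 t2 m x = 0" for t1 t2
    using assms by (auto simp: delta_trunc_def)
  then show "SILT d N T m x = 0" and "SILT_gap d N T \<Lambda> m x = 0"
    by (simp_all add: SILT_def SILT_gap_def hida_integral_def case_prod_unfold)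
qed

lemma SILT_gap_eq_0_outside: "m \<notin> multi_indices d \<Longrightarrow> SILT_gap d N T \<Lambda> m x = 0"
  unfolding SILT_gap_def hida_integral_def delta_trunc_def by (simp add: case_prod_unfold)

lemma indicator_time_simplex_Diff_gap_region:
  assumes "u < v" and "fst t \<le> u" and "v \<le> snd t" and "snd t - fst t \<noteq> \<Lambda>"
  shows "indicator (time_simplex T - gap_region T \<Lambda>) t
    = Theta (\<Lambda> - (v - u)) * (indicator (rho_domain T \<Lambda> u v) t :: real)"
  using assms by (auto simp: time_simplex_def gap_region_def rho_domain_def Theta_def indicator_def)

lemma SILT_gap_eq_SILT_minus_rho:
  assumes n: "n \<in> multi_indices d" "N \<le> mabs d n" and "1 \<le> N"
    and uv: "kmin (2 * mabs d n) x < kmax (2 * mabs d n) x"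
  shows "SILT_gap d N T \<Lambda> (\<lambda>i. 2 * n i) x = SILT d N T (\<lambda>i. 2 * n i) x
    - Theta (\<Lambda> - (kmax (2 * mabs d n) x - kmin (2 * mabs d n) x)) * rho d T \<Lambda> n x"
proof -
  define u where "u = kmin (2 * mabs d n) x"
  define v where "v = kmax (2 * mabs d n) x"
  define f where "f t = psi d n (fst t) (snd t) x" for t
  let ?A = "time_simplex T" and ?G = "gap_region T \<Lambda>" and ?D = "rho_domain T \<Lambda> u v"
  have K: "0 < mabs d n" using n \<open>1 \<le> N\<close> by simp
  have f_meas: "f \<in> borel_measurable lborel"
    unfolding f_def by (rule borel_measurable_psi_times)
  have "set_integrable lborel ?A f"
    using f_meas abs_psi_le_spread[OF K uv] sets_time_simplex
    by (intro set_integrable_bounded emeasure_lborel_subset_square_finite[of _ T])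
      (auto simp: f_def time_simplex_def)
  then have split: "(LINT t:?A|lborel. f t) = (LINT t:?G|lborel. f t) + (LINT t:?A - ?G|lborel. f t)"
    by (rule set_integral_Diff_subset[OF _ _ sets_time_simplex sets_gap_region])
      (auto simp: time_simplex_def gap_region_def)
  have "AE t in lborel. indicator (?A - ?G) t * f t = Theta (\<Lambda> - (v - u)) * (indicator ?D t * f t)"
    using AE_lborel_pair_not_on_line[of \<Lambda>]
  proof (rule eventually_mono)
    fix t :: "real \<times> real" assume "snd t - fst t \<noteq> \<Lambda>"
    then show "indicator (?A - ?G) t * f t = Theta (\<Lambda> - (v - u)) * (indicator ?D t * f t)"
      using indicator_time_simplex_Diff_gap_region[of u v t] uv K
      by (cases "fst t \<le> u \<and> v \<le> snd t") (auto simp: u_def v_def f_def psi_eq_coeff_powr)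
  qed
  then have "(\<integral>t. indicator (?A - ?G) t * f t \<partial>lborel)
      = (\<integral>t. Theta (\<Lambda> - (v - u)) * (indicator ?D t * f t) \<partial>lborel)"
    using f_meas sets_time_simplex sets_gap_region sets_rho_domain by (intro integral_cong_AE) auto
  then have "(LINT t:?A - ?G|lborel. f t) = Theta (\<Lambda> - (v - u)) * (LINT t:?D|lborel. f t)"
    by (simp add: set_lebesgue_integral_def)
  then show ?thesis
    using split unfolding SILT_double[OF n] SILT_gap_double[OF n] rho_eq_set_integral f_def u_def v_def
    by simp
qed

lemma rho_eq_0_unless_inside:
  assumes "rho d T \<Lambda> n x \<noteq> 0"
  shows "0 < kmin (2 * mabs d n) x \<and> kmax (2 * mabs d n) x < T"
proof (rule ccontr)
  assume "\<not> (0 < kmin (2 * mabs d n) x \<and> kmax (2 * mabs d n) x < T)"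
  then have "rho_domain T \<Lambda> (kmin (2 * mabs d n) x) (kmax (2 * mabs d n) x) = {}"
    by (auto simp: rho_domain_def)
  with assms show False
    by (simp add: rho_eq_set_integral set_lebesgue_integral_def)
qed

lemma Theta_neq_0_iff: "Theta x \<noteq> 0 \<longleftrightarrow> 0 < x"
  by (simp add: Theta_def)

section \<open>Closed form of \<open>\<rho>\<close>\<close>

lemma set_integral_Icc_FTC:
  fixes f F :: "real \<Rightarrow> real"
  assumes "a \<le> b" and "\<And>s. a \<le> s \<Longrightarrow> s \<le> b \<Longrightarrow> (F has_real_derivative f s) (at s)"
    and "continuous_on {a..b} f"
  shows "(LINT s:{a..b}|lborel. f s) = F b - F a"
  unfolding set_lebesgue_integral_def using assms
  by (intro integral_FTC_atLeastAtMost)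
    (auto simp: has_real_derivative_iff_has_vector_derivative[symmetric] intro: has_field_derivative_at_within)

lemma set_integral_open_endpoint_eq_Icc:
  fixes f :: "real \<Rightarrow> real"
  assumes "f \<in> borel_measurable lborel"
  shows "(LINT s:{a..<b}|lborel. f s) = (LINT s:{a..b}|lborel. f s)"
    and "(LINT s:{a<..b}|lborel. f s) = (LINT s:{a..b}|lborel. f s)"
proof -
  show "(LINT s:{a..<b}|lborel. f s) = (LINT s:{a..b}|lborel. f s)"
    using assms by (intro set_integral_cong_set)
      (auto simp: set_borel_measurable_def intro!: eventually_mono[OF AE_lborel_singleton[of b]])
  show "(LINT s:{a<..b}|lborel. f s) = (LINT s:{a..b}|lborel. f s)"
    using assms by (intro set_integral_cong_set)
      (auto simp: set_borel_measurable_def intro!: eventually_mono[OF AE_lborel_singleton[of a]])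
qed

lemma set_integral_shifted_powr:
  fixes \<alpha> :: real
  assumes "c < a" and "a \<le> b" and "\<alpha> \<noteq> 1"
  shows "(LINT s:{a..<b}|lborel. (s - c) powr (- \<alpha>))
    = ((b - c) powr (1 - \<alpha>) - (a - c) powr (1 - \<alpha>)) / (1 - \<alpha>)"
proof -
  have "(LINT s:{a..b}|lborel. (s - c) powr (- \<alpha>))
      = (b - c) powr (1 - \<alpha>) / (1 - \<alpha>) - (a - c) powr (1 - \<alpha>) / (1 - \<alpha>)"
  proof (rule set_integral_Icc_FTC[OF \<open>a \<le> b\<close>])
    fix s assume "a \<le> s" "s \<le> b"
    then have "0 < s - c" using assms by simp
    then have "((\<lambda>s. (s - c) powr (1 - \<alpha>)) has_real_derivative
        (1 - \<alpha>) * (s - c) powr (1 - \<alpha> - 1) * (1 - 0)) (at s)"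
      by (intro derivative_intros) auto
    then have "((\<lambda>s. (s - c) powr (1 - \<alpha>) / (1 - \<alpha>)) has_real_derivative
        (1 - \<alpha>) * (s - c) powr (1 - \<alpha> - 1) * (1 - 0) / (1 - \<alpha>)) (at s)"
      by (rule DERIV_cdivide)
    then show "((\<lambda>s. (s - c) powr (1 - \<alpha>) / (1 - \<alpha>)) has_real_derivative (s - c) powr (- \<alpha>)) (at s)"
      using assms(3) by simp
  qed (use assms in \<open>auto intro!: continuous_intros\<close>)
  then show ?thesis
    by (simp add: set_integral_open_endpoint_eq_Icc diff_divide_distrib)
qed

lemma set_integral_powr_antiderivative:
  fixes \<alpha> L :: real
  assumes "a \<le> b" and "b < v" and "\<alpha> \<noteq> 2"
  shows "(LINT s:{a..b}|lborel. L powr (1 - \<alpha>) - (v - s) powr (1 - \<alpha>))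
    = L powr (1 - \<alpha>) * (b - a) + ((v - b) powr (2 - \<alpha>) - (v - a) powr (2 - \<alpha>)) / (2 - \<alpha>)"
proof -
  have "(LINT s:{a..b}|lborel. L powr (1 - \<alpha>) - (v - s) powr (1 - \<alpha>))
      = (L powr (1 - \<alpha>) * b + (v - b) powr (2 - \<alpha>) / (2 - \<alpha>))
        - (L powr (1 - \<alpha>) * a + (v - a) powr (2 - \<alpha>) / (2 - \<alpha>))"
  proof (rule set_integral_Icc_FTC[OF \<open>a \<le> b\<close>])
    fix s assume "a \<le> s" "s \<le> b"
    then have "0 < v - s" using assms by simp
    then have "((\<lambda>s. (v - s) powr (2 - \<alpha>)) has_real_derivative
        (2 - \<alpha>) * (v - s) powr (2 - \<alpha> - 1) * (0 - 1)) (at s)"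
      by (intro derivative_intros) auto
    then have "((\<lambda>s. L powr (1 - \<alpha>) * s + (v - s) powr (2 - \<alpha>) / (2 - \<alpha>)) has_real_derivative
        L powr (1 - \<alpha>) * 1 + (2 - \<alpha>) * (v - s) powr (2 - \<alpha> - 1) * (0 - 1) / (2 - \<alpha>)) (at s)"
      by (intro DERIV_add DERIV_cmult DERIV_cdivide DERIV_ident)
    then show "((\<lambda>s. L powr (1 - \<alpha>) * s + (v - s) powr (2 - \<alpha>) / (2 - \<alpha>)) has_real_derivative
        L powr (1 - \<alpha>) - (v - s) powr (1 - \<alpha>)) (at s)"
      using assms(3) by (simp add: diff_diff_eq[symmetric])
  qed (use assms in \<open>auto intro!: continuous_intros\<close>)
  then show ?thesis by (simp add: algebra_simps diff_divide_distrib)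
qed

lemma set_integral_log_antiderivative:
  fixes L :: real
  assumes "a \<le> b" and "b < v"
  shows "(LINT s:{a..b}|lborel. L - (v - s) powr (1 - 2)) = L * (b - a) + (ln (v - b) - ln (v - a))"
proof -
  have "(LINT s:{a..b}|lborel. L - (v - s) powr (1 - 2)) = (L * b + ln (v - b)) - (L * a + ln (v - a))"
  proof (rule set_integral_Icc_FTC[OF \<open>a \<le> b\<close>])
    fix s assume "a \<le> s" "s \<le> b"
    then have "0 < v - s" using assms by simp
    then have "((\<lambda>s. L * s + ln (v - s)) has_real_derivative L * 1 + (0 - 1) / (v - s)) (at s)"
      by (auto intro!: derivative_eq_intros)
    then show "((\<lambda>s. L * s + ln (v - s)) has_real_derivative L - (v - s) powr (1 - 2)) (at s)"
      using \<open>0 < v - s\<close> by (simp add: powr_minus_divide powr_minus)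
  qed (use assms in \<open>auto intro!: continuous_intros\<close>)
  then show ?thesis by (simp add: algebra_simps)
qed

lemma mem_rho_domain_iff:
  assumes "\<Lambda> < v" and "u < T - \<Lambda>"
  shows "(s, t) \<in> rho_domain T \<Lambda> u v \<longleftrightarrow> s \<le> u \<and> v \<le> t \<and> t < s + \<Lambda>"
  using assms by (auto simp: rho_domain_def)

lemma integral_rho_domain_slice:
  assumes "\<Lambda> < v" and "u < T - \<Lambda>" and "u < v" and "\<alpha> \<noteq> 1"
  shows "(\<integral>t. indicator (rho_domain T \<Lambda> u v) (s, t) * (t - s) powr (- \<alpha>) \<partial>lborel)
    = indicator {v - \<Lambda><..u} s * ((\<Lambda> powr (1 - \<alpha>) - (v - s) powr (1 - \<alpha>)) / (1 - \<alpha>))"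
proof (cases "v - \<Lambda> < s \<and> s \<le> u")
  case True
  then have "(\<integral>t. indicator (rho_domain T \<Lambda> u v) (s, t) * (t - s) powr (- \<alpha>) \<partial>lborel)
      = (LINT t:{v..<s + \<Lambda>}|lborel. (t - s) powr (- \<alpha>))"
    using assms(1,2) by (simp add: set_lebesgue_integral_def indicator_def mem_rho_domain_iff)
  also have "\<dots> = (\<Lambda> powr (1 - \<alpha>) - (v - s) powr (1 - \<alpha>)) / (1 - \<alpha>)"
    using True assms by (subst set_integral_shifted_powr) auto
  finally show ?thesis using True by simp
next
  case False
  then have "indicator (rho_domain T \<Lambda> u v) (s, t) = (0::real)" for t
    using assms(1,2) by (auto simp: indicator_def mem_rho_domain_iff)
  then show ?thesis using False by simp
qed

lemma rho_eq_iterated_integral: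
  fixes d :: nat and n :: "nat \<Rightarrow> nat" and x :: "nat \<Rightarrow> real"
  defines "u \<equiv> kmin (2 * mabs d n) x" and "v \<equiv> kmax (2 * mabs d n) x" and "\<alpha> \<equiv> psi_exponent d n"
  assumes K: "0 < mabs d n" and \<alpha>: "\<alpha> \<noteq> 1"
    and uv: "\<Lambda> < v" "u < T - \<Lambda>" "u < v" "v - u < \<Lambda>"
  shows "rho d T \<Lambda> n x
    = psi_coeff d n * (LINT s:{v - \<Lambda>..u}|lborel. (\<Lambda> powr (1 - \<alpha>) - (v - s) powr (1 - \<alpha>)) / (1 - \<alpha>))"
proof -
  define f where "f t = psi d n (fst t) (snd t) x" for t
  define \<phi> where "\<phi> s = (\<Lambda> powr (1 - \<alpha>) - (v - s) powr (1 - \<alpha>)) / (1 - \<alpha>)" for s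
  let ?D = "rho_domain T \<Lambda> u v"
  have f_on_D: "indicator ?D t * f t = psi_coeff d n * (indicator ?D t * (snd t - fst t) powr (- \<alpha>))" for t
    using K by (auto simp: f_def u_def v_def \<alpha>_def psi_eq_coeff_powr rho_domain_def indicator_def)
  have "f \<in> borel_measurable lborel"
    unfolding f_def by (rule borel_measurable_psi_times)
  then have "set_integrable lborel ?D f"
    using abs_psi_le_spread[OF K uv(3)[unfolded u_def v_def]] sets_rho_domain uv
    by (intro set_integrable_bounded emeasure_lborel_subset_square_finite[of _ T])
      (auto simp: f_def rho_domain_def u_def v_def)
  then have D_int: "integrable (lborel \<Otimes>\<^sub>M lborel) (\<lambda>t. indicator ?D t *\<^sub>R f t)"
    by (simp add: set_integrable_def lborel_prod)
  have "rho d T \<Lambda> n x = (\<integral>t. indicator ?D t *\<^sub>R f t \<partial>(lborel \<Otimes>\<^sub>M lborel))"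
    by (simp add: rho_eq_set_integral set_lebesgue_integral_def lborel_prod f_def u_def v_def)
  also have "\<dots> = (\<integral>s. (\<integral>t. indicator ?D (s, t) *\<^sub>R f (s, t) \<partial>lborel) \<partial>lborel)"
    by (rule lborel_pair.integral_fst'[OF D_int, symmetric])
  also have "\<dots> = (\<integral>s. psi_coeff d n * (indicator {v - \<Lambda><..u} s * \<phi> s) \<partial>lborel)"
    using integral_rho_domain_slice[OF uv(1-3) \<alpha>] by (simp add: f_on_D \<phi>_def)
  also have "\<dots> = psi_coeff d n * (LINT s:{v - \<Lambda><..u}|lborel. \<phi> s)"
    by (simp add: set_lebesgue_integral_def)
  also have "\<dots> = psi_coeff d n * (LINT s:{v - \<Lambda>..u}|lborel. \<phi> s)"
    by (subst set_integral_open_endpoint_eq_Icc(2)) (auto simp: \<phi>_def[abs_def])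
  finally show ?thesis by (simp add: \<phi>_def)
qed

lemma rho_closed_form:
  fixes d :: nat and n :: "nat \<Rightarrow> nat" and x :: "nat \<Rightarrow> real"
  defines "u \<equiv> kmin (2 * mabs d n) x" and "v \<equiv> kmax (2 * mabs d n) x"
  assumes "0 < mabs d n" and "1 \<le> d" and "real d / 2 + real (mabs d n) \<noteq> 2"
    and "\<Lambda> < v" and "u < T - \<Lambda>" and "u < v" and "v - u < \<Lambda>"
  shows "rho d T \<Lambda> n x =
    (2 * pi) powr (- (real d / 2)) / mfact d n * (- 1 / 2) ^ (mabs d n)
    * (1 / (real d / 2 + real (mabs d n) - 1))
    * (((v - u) powr (- (real d / 2) - real (mabs d n) + 2)
        - \<Lambda> powr (- (real d / 2) - real (mabs d n) + 2)) / (real d / 2 + real (mabs d n) - 2)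
      + (v - u - \<Lambda>) * \<Lambda> powr (- (real d / 2) - real (mabs d n) + 1))"
proof -
  define \<alpha> where "\<alpha> = psi_exponent d n"
  have "\<alpha> \<noteq> 1" "\<alpha> \<noteq> 2"
    using assms(3-5) by (auto simp: \<alpha>_def psi_exponent_def)
  have "rho d T \<Lambda> n x
      = psi_coeff d n * ((LINT s:{v - \<Lambda>..u}|lborel. \<Lambda> powr (1 - \<alpha>) - (v - s) powr (1 - \<alpha>)) / (1 - \<alpha>))"
    using rho_eq_iterated_integral[where d=d and n=n and x=x and \<Lambda>=\<Lambda> and T=T] assms \<open>\<alpha> \<noteq> 1\<close>
    by (simp add: \<alpha>_def set_lebesgue_integral_def)
  also have "\<dots> = psi_coeff d n * ((\<Lambda> powr (1 - \<alpha>) * (u - (v - \<Lambda>))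
      + ((v - u) powr (2 - \<alpha>) - \<Lambda> powr (2 - \<alpha>)) / (2 - \<alpha>)) / (1 - \<alpha>))"
    using assms(8,9) \<open>\<alpha> \<noteq> 2\<close> by (subst set_integral_powr_antiderivative) auto
  also have "\<dots> = psi_coeff d n * (1 / (\<alpha> - 1))
      * (((v - u) powr (2 - \<alpha>) - \<Lambda> powr (2 - \<alpha>)) / (\<alpha> - 2) + (v - u - \<Lambda>) * \<Lambda> powr (1 - \<alpha>))"
    using \<open>\<alpha> \<noteq> 1\<close> \<open>\<alpha> \<noteq> 2\<close> by (simp add: field_simps)
  finally show ?thesis
    by (simp add: \<alpha>_def psi_exponent_def psi_coeff_def algebra_simps)
qed

lemma rho_closed_form_log:
  fixes d :: nat and n :: "nat \<Rightarrow> nat" and x :: "nat \<Rightarrow> real"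
  defines "u \<equiv> kmin (2 * mabs d n) x" and "v \<equiv> kmax (2 * mabs d n) x"
  assumes "d = 2" and "mabs d n = 1" and "n \<in> multi_indices d"
    and "\<Lambda> < v" and "u < T - \<Lambda>" and "u < v" and "v - u < \<Lambda>"
  shows "rho d T \<Lambda> n x = 1 / (4 * pi) * (ln (v - u) - ln \<Lambda> + (\<Lambda> - v + u) / \<Lambda>)"
proof -
  have "n 0 + n 1 = 1" using assms(3,4) by (simp add: mabs_def numeral_2_eq_2)
  then have "n 0 \<le> 1" "n 1 \<le> 1" by auto
  then have "fact (n 0) = (1::real)" "fact (n 1) = (1::real)"
    by (auto simp: le_Suc_eq)
  then have "mfact d n = 1" using assms(3) by (simp add: mfact_def numeral_2_eq_2)
  then have coeff: "psi_coeff d n = - 1 / (4 * pi)"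
    using assms(3,4) by (simp add: psi_coeff_def powr_minus_divide)
  have \<alpha>: "psi_exponent d n = 2" using assms(3,4) by (simp add: psi_exponent_def)
  have "rho d T \<Lambda> n x = psi_coeff d n * ((LINT s:{v - \<Lambda>..u}|lborel. 1 / \<Lambda> - (v - s) powr (1 - 2)) / (1 - 2))"
    using rho_eq_iterated_integral[where d=d and n=n and x=x and \<Lambda>=\<Lambda> and T=T] assms \<alpha>
    by (simp add: set_lebesgue_integral_def powr_minus_divide)
  also have "\<dots> = - 1 / (4 * pi) * ((1 / \<Lambda> * (u - (v - \<Lambda>)) + (ln (v - u) - ln \<Lambda>)) / (1 - 2))"
    using assms(8,9) by (subst set_integral_log_antiderivative) (auto simp: coeff)
  also have "\<dots> = 1 / (4 * pi) * (ln (v - u) - ln \<Lambda> + (\<Lambda> - v + u) / \<Lambda>)"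
    using assms(6,8,9) by (simp add: field_simps)
  finally show ?thesis .
qed

section \<open>Membership in \<open>(S)\<^sup>*\<close>\<close>

lemma emeasure_gap_region_finite: "emeasure lborel (gap_region T \<Lambda>) < \<infinity>"
  by (rule emeasure_lborel_subset_square_finite[of _ T]) (auto simp: gap_region_def)

lemma SILT_gap_double_measurable:
  assumes "n \<in> multi_indices d" and "N \<le> mabs d n"
  shows "SILT_gap d N T \<Lambda> (\<lambda>i. 2 * n i) \<in> borel_measurable (PiM {..<2 * mabs d n} (\<lambda>_. lborel))"
proof -
  have "(\<lambda>(x, t). indicator (gap_region T \<Lambda>) t * psi d n (fst t) (snd t) x)
      \<in> borel_measurable (PiM {..<2 * mabs d n} (\<lambda>_. lborel) \<Otimes>\<^sub>M lborel)"
    using borel_measurable_psi_joint[of d n] sets_gap_region[of T \<Lambda>]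
    by (simp add: case_prod_unfold) measurable
  then have "(\<lambda>x. \<integral>t. indicator (gap_region T \<Lambda>) t * psi d n (fst t) (snd t) x \<partial>lborel)
      \<in> borel_measurable (PiM {..<2 * mabs d n} (\<lambda>_. lborel))"
    by (rule lborel.borel_measurable_lebesgue_integral)
  then show ?thesis
    by (simp add: SILT_gap_double[OF assms, abs_def] set_lebesgue_integral_def)
qed

lemma abs_SILT_gap_double_le:
  assumes n: "n \<in> multi_indices d" "N \<le> mabs d n" and K: "0 < mabs d n" and "0 < \<Lambda>"
  shows "\<bar>SILT_gap d N T \<Lambda> (\<lambda>i. 2 * n i) x\<bar>
    \<le> \<bar>psi_coeff d n\<bar> * \<Lambda> powr (- psi_exponent d n) * measure lborel (gap_region T \<Lambda>)
      * (\<Prod>j<2 * mabs d n. indicator {0..T} (x j))"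
proof -
  let ?G = "gap_region T \<Lambda>"
  let ?c = "\<bar>psi_coeff d n\<bar> * \<Lambda> powr (- psi_exponent d n)"
  have kernel: "SILT_gap d N T \<Lambda> (\<lambda>i. 2 * n i) x = (\<integral>t. indicator ?G t * psi d n (fst t) (snd t) x \<partial>lborel)"
    by (simp add: SILT_gap_double[OF n] set_lebesgue_integral_def)
  have pointwise: "\<bar>indicator ?G t * psi d n (fst t) (snd t) x\<bar> \<le> ?c * indicator ?G t" for t
    using abs_psi_le_gap[OF K \<open>0 < \<Lambda>\<close>] by (cases "t \<in> ?G") (auto simp: gap_region_def)
  have majorant_int: "integrable lborel (\<lambda>t. ?c * indicator ?G t)"
    using sets_gap_region emeasure_gap_region_finite
    by (intro integrable_mult_right integrable_real_indicator) auto
  have "integrable lborel (\<lambda>t. indicator ?G t * psi d n (fst t) (snd t) x)"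
  proof (rule Bochner_Integration.integrable_bound[OF majorant_int])
    show "(\<lambda>t. indicator ?G t * psi d n (fst t) (snd t) x) \<in> borel_measurable lborel"
      using sets_gap_region borel_measurable_psi_times[of d n x] by measurable
  qed (use pointwise in \<open>auto intro: order_trans[OF _ abs_ge_self]\<close>)
  then have "\<bar>SILT_gap d N T \<Lambda> (\<lambda>i. 2 * n i) x\<bar> \<le> (\<integral>t. ?c * indicator ?G t \<partial>lborel)"
    unfolding kernel using majorant_int pointwise
    by (intro order_trans[OF integral_abs_bound] integral_mono) auto
  also have "\<dots> = ?c * measure lborel ?G"
    using sets_gap_region emeasure_gap_region_finite by simp
  finally have bound: "\<bar>SILT_gap d N T \<Lambda> (\<lambda>i. 2 * n i) x\<bar> \<le> ?c * measure lborel ?G" .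
  show ?thesis
  proof (cases "\<forall>j<2 * mabs d n. x j \<in> {0..T}")
    case True
    then show ?thesis using bound by (simp add: indicator_def)
  next
    case False
    then obtain j where j: "j < 2 * mabs d n" "x j < 0 \<or> T < x j" by auto
    have "(\<lambda>t. indicator ?G t * psi d n (fst t) (snd t) x) = (\<lambda>_. 0)"
      using psi_eq_0_outside[OF j(1)] j(2) by (auto simp: gap_region_def indicator_def fun_eq_iff)
    then show ?thesis
      unfolding kernel by (auto intro!: mult_nonneg_nonneg prod_nonneg)
  qed
qed

lemma abs_psi_coeff_mult_powr:
  assumes "0 < \<Lambda>"
  shows "\<bar>psi_coeff d n\<bar> * \<Lambda> powr (- psi_exponent d n)
    = (2 * pi) powr (- (real d / 2)) * \<Lambda> powr (- (real d / 2)) / mfact d n * (1 / (2 * \<Lambda>)) ^ mabs d n"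
proof -
  have "\<bar>psi_coeff d n\<bar> = (2 * pi) powr (- (real d / 2)) / mfact d n * (1 / 2) ^ mabs d n"
    using mfact_pos[of d n] by (simp add: psi_coeff_def abs_mult power_abs)
  moreover have "\<Lambda> powr (- psi_exponent d n) = \<Lambda> powr (- (real d / 2)) * (1 / \<Lambda>) ^ mabs d n"
  proof -
    have "\<Lambda> powr (- psi_exponent d n) = \<Lambda> powr (- (real d / 2)) * \<Lambda> powr (- real (mabs d n))"
      by (simp add: psi_exponent_def powr_add[symmetric])
    also have "\<Lambda> powr (- real (mabs d n)) = (1 / \<Lambda>) ^ mabs d n"
      using assms by (simp add: powr_minus powr_realpow power_one_over inverse_eq_divide)
    finally show ?thesis .
  qed
  moreover have "(1 / 2) ^ mabs d n * (1 / \<Lambda>) ^ mabs d n = (1 / (2 * \<Lambda>)) ^ mabs d n"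
    by (simp add: power_mult_distrib[symmetric])
  ultimately show ?thesis
    by (simp add: mult_ac)
qed

lemma chaos_weight_arith:
  fixes mf f c L R W :: real
  assumes "mf \<le> 4 ^ k * f\<^sup>2" and "0 < f" and "0 < L" and "0 \<le> W" and "R\<^sup>2 * W / L \<le> 1 / 2"
  shows "mf * (c / f * (1 / (2 * L)) ^ k * R ^ (2 * k))\<^sup>2 * W ^ (2 * k) \<le> c\<^sup>2 * (1 / 2) ^ (2 * k)"
proof -
  let ?X = "(c / f * (1 / (2 * L)) ^ k * R ^ (2 * k))\<^sup>2 * W ^ (2 * k)"
  have four: "(4::real) ^ k = (2 ^ k)\<^sup>2"
    by (simp add: power2_eq_square power_mult_distrib[symmetric])
  have "mf * ?X \<le> (4 ^ k * f\<^sup>2) * ?X"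
    using assms(1,4) by (intro mult_right_mono) auto
  also have "\<dots> = c\<^sup>2 * (R\<^sup>2 * W / L) ^ (2 * k)"
    using assms(2,3)
    by (simp add: power_mult_distrib power_divide power_mult[symmetric] field_simps)
      (simp add: power_mult mult.commute four)
  also have "\<dots> \<le> c\<^sup>2 * (1 / 2) ^ (2 * k)"
    using assms(3-5) by (intro mult_left_mono power_mono) auto
  finally show ?thesis by (simp only: mult.assoc)
qed

lemma multi_index_even_cases:
  assumes "m \<in> multi_indices d" and "\<not> ((\<exists>i. odd (m i)) \<or> mabs d m < 2 * N)"
  obtains n where "n \<in> multi_indices d" and "m = (\<lambda>i. 2 * n i)" and "N \<le> mabs d n"
proof
  let ?n = "\<lambda>i. m i div 2"
  show "m = (\<lambda>i. 2 * ?n i)" using assms(2) by (auto simp: fun_eq_iff)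
  then show "N \<le> mabs d ?n" using assms(2) mabs_double[of d ?n] by simp
  show "?n \<in> multi_indices d" using assms(1) by (simp add: multi_indices_def)
qed

lemma SILT_gap_double_herm_coeff:
  fixes d N :: nat and T \<Lambda> :: real
  defines "c \<equiv> (2 * pi) powr (- (real d / 2)) * \<Lambda> powr (- (real d / 2)) * measure lborel (gap_region T \<Lambda>)"
  assumes n: "n \<in> multi_indices d" "N \<le> mabs d n" and "1 \<le> N" and "0 \<le> T" and "0 < \<Lambda>"
  shows "integrable (PiM {..<2 * mabs d n} (\<lambda>_. lborel))
      (\<lambda>x. SILT_gap d N T \<Lambda> (\<lambda>i. 2 * n i) x * herm_test (2 * mabs d n) \<kappa> x)"
    and "\<bar>herm_coeff (2 * mabs d n) (SILT_gap d N T \<Lambda> (\<lambda>i. 2 * n i)) \<kappa>\<bar>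
      \<le> c / mfact d n * (1 / (2 * \<Lambda>)) ^ mabs d n * ((T + 1) / 2) ^ (2 * mabs d n)"
proof -
  have K: "0 < mabs d n" using n \<open>1 \<le> N\<close> by simp
  have bound: "\<bar>SILT_gap d N T \<Lambda> (\<lambda>i. 2 * n i) x\<bar>
      \<le> c / mfact d n * (1 / (2 * \<Lambda>)) ^ mabs d n * (\<Prod>j<2 * mabs d n. indicator {0..T} (x j))" for x
    using abs_SILT_gap_double_le[OF n K \<open>0 < \<Lambda>\<close>, of T x]
    by (simp add: abs_psi_coeff_mult_powr[OF \<open>0 < \<Lambda>\<close>] c_def mult_ac)
  have "0 \<le> c / mfact d n * (1 / (2 * \<Lambda>)) ^ mabs d n"
    using \<open>0 < \<Lambda>\<close> mfact_pos[of d n] by (simp add: c_def)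
  from herm_coeff_of_bounded_kernel[OF SILT_gap_double_measurable[OF n] bound \<open>0 \<le> T\<close> this]
  show "integrable (PiM {..<2 * mabs d n} (\<lambda>_. lborel))
      (\<lambda>x. SILT_gap d N T \<Lambda> (\<lambda>i. 2 * n i) x * herm_test (2 * mabs d n) \<kappa> x)"
    and "\<bar>herm_coeff (2 * mabs d n) (SILT_gap d N T \<Lambda> (\<lambda>i. 2 * n i)) \<kappa>\<bar>
      \<le> c / mfact d n * (1 / (2 * \<Lambda>)) ^ mabs d n * ((T + 1) / 2) ^ (2 * mabs d n)"
    by blast+
qed

text \<open>The factor \<open>(1 / (2\<Lambda>))\<^sup>|\<^sup>n\<^sup>|\<close> of the kernel bound and \<open>m! \<le> 4\<^sup>|\<^sup>n\<^sup>| (n!)\<^sup>2\<close> for \<open>m = 2n\<close> leave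
  a geometric term once the Sobolev weights are small enough.\<close>
lemma SILT_gap_chaos_term_le:
  fixes d N p :: nat and T \<Lambda> W :: real
  defines "c \<equiv> (2 * pi) powr (- (real d / 2)) * \<Lambda> powr (- (real d / 2)) * measure lborel (gap_region T \<Lambda>)"
  assumes "1 \<le> N" and "0 \<le> T" and "0 < \<Lambda>" and m: "m \<in> multi_indices d"
    and weights: "(\<integral>\<^sup>+ k. ennreal (1 / (2 * real k + 2) ^ (2 * p)) \<partial>count_space UNIV) \<le> ennreal W"
    and "0 \<le> W" and small: "((T + 1) / 2)\<^sup>2 * W / \<Lambda> \<le> 1 / 2"
  shows "ennreal (mfact d m) * neg_norm2 p (mabs d m) (SILT_gap d N T \<Lambda> m)
    \<le> ennreal (c\<^sup>2) * (\<Prod>i<d. ennreal ((1 / 2) ^ m i))"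
proof (cases "(\<exists>i. odd (m i)) \<or> mabs d m < 2 * N")
  case True
  then have "SILT_gap d N T \<Lambda> m = (\<lambda>x. 0)"
    using SILT_kernels_eq_0(2) by (auto simp: fun_eq_iff)
  then show ?thesis by (simp add: neg_norm2_def herm_coeff_def)
next
  case False
  obtain n where n: "n \<in> multi_indices d" "m = (\<lambda>i. 2 * n i)" "N \<le> mabs d n"
    by (rule multi_index_even_cases[OF m False])
  define k where "k = mabs d n"
  define M where "M = c / mfact d n * (1 / (2 * \<Lambda>)) ^ k * ((T + 1) / 2) ^ (2 * k)"
  have "neg_norm2 p (2 * k) (SILT_gap d N T \<Lambda> m)
      \<le> ennreal (M\<^sup>2) * (\<integral>\<^sup>+ k. ennreal (1 / (2 * real k + 2) ^ (2 * p)) \<partial>count_space UNIV) ^ (2 * k)"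
    using SILT_gap_double_herm_coeff(2)[OF n(1,3) \<open>1 \<le> N\<close> \<open>0 \<le> T\<close> \<open>0 < \<Lambda>\<close>]
    by (intro neg_norm2_le_of_herm_coeff_bound) (simp add: n(2) M_def k_def c_def)
  also have "\<dots> \<le> ennreal (M\<^sup>2) * ennreal W ^ (2 * k)"
    using weights by (intro mult_left_mono power_mono) auto
  also have "\<dots> = ennreal (M\<^sup>2 * W ^ (2 * k))"
    using \<open>0 \<le> W\<close> by (simp add: ennreal_mult ennreal_power)
  finally have "ennreal (mfact d m) * neg_norm2 p (mabs d m) (SILT_gap d N T \<Lambda> m)
      \<le> ennreal (mfact d m * (M\<^sup>2 * W ^ (2 * k)))"
    using mfact_pos[of d m] by (simp add: n(2) mabs_double k_def ennreal_mult mult_left_mono)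
  also have "\<dots> \<le> ennreal (c\<^sup>2 * (1 / 2) ^ (2 * k))"
    using chaos_weight_arith[OF _ mfact_pos \<open>0 < \<Lambda>\<close> \<open>0 \<le> W\<close> small] mfact_double_le[of d n]
    by (intro ennreal_leI) (simp add: n(2) M_def k_def mult.assoc)
  also have "(1 / 2) ^ (2 * k) = (\<Prod>i<d. (1 / 2::real) ^ m i)"
    by (simp add: n(2) k_def mabs_def sum_distrib_left flip: power_sum)
  also have "ennreal (c\<^sup>2 * (\<Prod>i<d. (1 / 2) ^ m i)) = ennreal (c\<^sup>2) * (\<Prod>i<d. ennreal ((1 / 2) ^ m i))"
    by (simp add: prod_ennreal ennreal_mult')
  finally show ?thesis .
qed

lemma integrable_SILT_gap_herm_test:
  assumes "m \<in> multi_indices d" and "1 \<le> N" and "0 \<le> T" and "0 < \<Lambda>"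
  shows "integrable (PiM {..<mabs d m} (\<lambda>_. lborel)) (\<lambda>x. SILT_gap d N T \<Lambda> m x * herm_test (mabs d m) \<kappa> x)"
proof (cases "(\<exists>i. odd (m i)) \<or> mabs d m < 2 * N")
  case True
  then show ?thesis by (simp add: SILT_kernels_eq_0(2))
next
  case False
  obtain n where n: "n \<in> multi_indices d" "m = (\<lambda>i. 2 * n i)" "N \<le> mabs d n"
    by (rule multi_index_even_cases[OF assms(1) False])
  show ?thesis
    using SILT_gap_double_herm_coeff(1)[OF n(1,3) assms(2-4)] by (simp add: n(2) mabs_double)
qed

lemma hida_dist_SILT_gap:
  assumes "1 \<le> N" and "0 \<le> T" and "0 < \<Lambda>"
  shows "hida_dist d (SILT_gap d N T \<Lambda>)"
proof -
  define R where "R = (T + 1) / 2"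
  define c where "c = (2 * pi) powr (- (real d / 2)) * \<Lambda> powr (- (real d / 2)) * measure lborel (gap_region T \<Lambda>)"
  have "0 < R" using \<open>0 \<le> T\<close> by (simp add: R_def)
  obtain p where weights:
    "(\<integral>\<^sup>+ k. ennreal (1 / (2 * real k + 2) ^ (2 * p)) \<partial>count_space UNIV) \<le> ennreal (\<Lambda> / (2 * R\<^sup>2))"
    using sobolev_weight_sum_small[of "\<Lambda> / (2 * R\<^sup>2)"] \<open>0 < R\<close> \<open>0 < \<Lambda>\<close> by auto
  have "0 \<le> \<Lambda> / (2 * R\<^sup>2)"
    using \<open>0 < \<Lambda>\<close> by simp
  moreover have "R\<^sup>2 * (\<Lambda> / (2 * R\<^sup>2)) / \<Lambda> \<le> 1 / 2"
    using \<open>0 < R\<close> \<open>0 < \<Lambda>\<close> by simp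
  ultimately have "(\<integral>\<^sup>+ m. ennreal (mfact d m) * neg_norm2 p (mabs d m) (SILT_gap d N T \<Lambda> m) \<partial>count_space (multi_indices d))
      \<le> (\<integral>\<^sup>+ m. ennreal (c\<^sup>2) * (\<Prod>i<d. ennreal ((1 / 2) ^ m i)) \<partial>count_space (multi_indices d))"
    using SILT_gap_chaos_term_le[where d=d, OF assms _ weights, folded R_def c_def]
    by (intro nn_integral_mono) simp
  also have "\<dots> = ennreal (c\<^sup>2) * 2 ^ d"
    by (simp add: nn_integral_cmult nn_integral_prod_multi_indices[where f="\<lambda>k. ennreal ((1 / 2) ^ k)"]
        nn_integral_geometric_half)
  also have "\<dots> < \<infinity>"
    by (simp add: ennreal_mult_less_top power_less_top_ennreal)
  finally show ?thesis
    unfolding hida_dist_def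
    using SILT_gap_eq_0_outside integrable_SILT_gap_herm_test[OF _ assms] by blast
qed

theorem mainTheorem1:
  fixes d N :: nat and T \<Lambda> :: real
  assumes "d \<ge> 1" and "N \<ge> 1" and "2 * real N > real d - 2"
    and "T > 0" and "0 < \<Lambda>" and "\<Lambda> < T"
  shows
    "hida_dist d (SILT_gap d N T \<Lambda>)
     \<and> (\<forall>m \<in> multi_indices d. ((\<exists>i. odd (m i)) \<or> mabs d m < 2 * N) \<longrightarrow>
          (\<forall>x. SILT_gap d N T \<Lambda> m x = 0 \<and> SILT d N T m x = 0))
     \<and> (\<forall>n \<in> multi_indices d. mabs d n \<ge> N \<longrightarrow>
          (\<forall>x. kmin (2 * mabs d n) x < kmax (2 * mabs d n) x \<longrightarrow>
             SILT_gap d N T \<Lambda> (\<lambda>i. 2 * n i) x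
               = SILT d N T (\<lambda>i. 2 * n i) x
                 - Theta (\<Lambda> - (kmax (2 * mabs d n) x - kmin (2 * mabs d n) x)) * rho d T \<Lambda> n x
             \<and> SILT d N T (\<lambda>i. 2 * n i) x - SILT_gap d N T \<Lambda> (\<lambda>i. 2 * n i) x
               = Theta (\<Lambda> - (kmax (2 * mabs d n) x - kmin (2 * mabs d n) x)) * rho d T \<Lambda> n x
             \<and> (Theta (\<Lambda> - (kmax (2 * mabs d n) x - kmin (2 * mabs d n) x)) * rho d T \<Lambda> n x \<noteq> 0
                 \<longrightarrow> 0 < kmin (2 * mabs d n) x \<and> kmax (2 * mabs d n) x < T
                     \<and> kmax (2 * mabs d n) x - kmin (2 * mabs d n) x < \<Lambda>)))
     \<and> (\<forall>n \<in> multi_indices d. mabs d n \<ge> N \<longrightarrow>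
          (\<forall>x. \<Lambda> < kmax (2 * mabs d n) x \<and> kmin (2 * mabs d n) x < T - \<Lambda>
               \<and> kmin (2 * mabs d n) x < kmax (2 * mabs d n) x
               \<and> kmax (2 * mabs d n) x - kmin (2 * mabs d n) x < \<Lambda> \<longrightarrow>
             (real d / 2 + real (mabs d n) \<noteq> 2 \<longrightarrow>
                rho d T \<Lambda> n x =
                  (2 * pi) powr (- (real d / 2)) / mfact d n * (- 1 / 2) ^ (mabs d n)
                  * (1 / (real d / 2 + real (mabs d n) - 1))
                  * (((kmax (2 * mabs d n) x - kmin (2 * mabs d n) x)
                        powr (- (real d / 2) - real (mabs d n) + 2)
                      - \<Lambda> powr (- (real d / 2) - real (mabs d n) + 2))
                       / (real d / 2 + real (mabs d n) - 2)
                     + (kmax (2 * mabs d n) x - kmin (2 * mabs d n) x - \<Lambda>)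
                       * \<Lambda> powr (- (real d / 2) - real (mabs d n) + 1)))
             \<and> (d = 2 \<and> mabs d n = 1 \<longrightarrow>
                rho d T \<Lambda> n x =
                  1 / (4 * pi) * (ln (kmax (2 * mabs d n) x - kmin (2 * mabs d n) x) - ln \<Lambda>
                     + (\<Lambda> - kmax (2 * mabs d n) x + kmin (2 * mabs d n) x) / \<Lambda>))))"
proof (intro conjI ballI allI impI)
  show "hida_dist d (SILT_gap d N T \<Lambda>)"
    using hida_dist_SILT_gap assms by simp
qed (use assms(2) in \<open>auto simp: SILT_kernels_eq_0 SILT_gap_eq_SILT_minus_rho Theta_neq_0_iff
    rho_closed_form[OF _ assms(1)] rho_closed_form_log dest: rho_eq_0_unless_inside\<close>)

end
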